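(* Let $\mathcal G$ be a second countable ample groupoid whose unit space $\mathcal G^{(0)}$ is Hausdorff, let $\ell$ be a field, and let $\nu:\mathcal G^{(2)}\to\mathcal U(\ell)$ be a normalized continuous $2$-cocycle. Assume that $\mathcal G$ is effective and minimal, that for every nonzero $f\in\mathcal A(\mathcal G,\nu)$ the support $\{\xi:f(\xi)\neq0\}$ has nonempty interior, and that for every nonempty compact open subset $L\subset\mathcal G^{(0)}$ the idempotent $\chi_L\in\mathcal A(\mathcal G,\nu)$ is infinite. Then $\mathcal A(\mathcal G,\nu)$ is simple purely infinite.
   Context: An ample groupoid is an étale topological groupoid (possibly non-Hausdorff) whose topology has a basis of compact open slices (open sets on which domain $d$ and range are injective). $\mathcal G$ is effective if the interior of its isotropy is $\mathcal G^{(0)}$, minimal if every orbit in $\mathcal G^{(0)}$ is dense. A continuous $2$-cocycle is a locally constant $\nu:\mathcal G^{(2)}\to\mathcal U(\ell)$ with $\nu(\xi_1,\xi_2)\nu(\xi_1\xi_2,\xi_3)=\nu(\xi_1,\xi_2\xi_3)\nu(\xi_2,\xi_3)$; normalized means $\nu(\xi,d(\xi))=\nu(d(\xi^{-1}),\xi)=1$. The twisted Steinberg algebra $\mathcal A(\mathcal G,\nu)$ is the span of characteristic functions of compact open slices (equivalently of functions continuous and compactly supported on a Hausdorff open subset and zero elsewhere) with product $(f\star_\nu g)(\xi)=\sum_{\xi=\xi_1\xi_2}\nu(\xi_1,\xi_2)f(\xi_1)g(\xi_2)$. An idempotent $p$ is infinite if it is Murray–von Neumann equivalent to a proper subidempotent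 of itself. A ring is simple purely infinite if it is simple and every nonzero right ideal contains an infinite idempotent. *)

theory Defs
  imports "HOL-Analysis.Analysis"
begin

record 'g groupoid =
  gcar :: "'g set"
  gunits :: "'g set"
  gd :: "'g \<Rightarrow> 'g"
  gr :: "'g \<Rightarrow> 'g"
  gmul :: "'g \<Rightarrow> 'g \<Rightarrow> 'g"
  ginv :: "'g \<Rightarrow> 'g"

definition composable :: "'g groupoid \<Rightarrow> ('g \<times> 'g) set" where
  "composable \<Gamma> = {(a, b). a \<in> gcar \<Gamma> \<and> b \<in> gcar \<Gamma> \<and> gd \<Gamma> a = gr \<Gamma> b}"

definition is_groupoid :: "'g groupoid \<Rightarrow> bool" where
  "is_groupoid \<Gamma> \<longleftrightarrow>
     gunits \<Gamma> \<subseteq> gcar \<Gamma>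
   \<and> (\<forall>a\<in>gcar \<Gamma>. gd \<Gamma> a \<in> gunits \<Gamma> \<and> gr \<Gamma> a \<in> gunits \<Gamma>)
   \<and> (\<forall>u\<in>gunits \<Gamma>. gd \<Gamma> u = u \<and> gr \<Gamma> u = u)
   \<and> (\<forall>a\<in>gcar \<Gamma>. \<forall>b\<in>gcar \<Gamma>. gd \<Gamma> a = gr \<Gamma> b \<longrightarrow>
         gmul \<Gamma> a b \<in> gcar \<Gamma> \<and> gd \<Gamma> (gmul \<Gamma> a b) = gd \<Gamma> b
         \<and> gr \<Gamma> (gmul \<Gamma> a b) = gr \<Gamma> a)
   \<and> (\<forall>a\<in>gcar \<Gamma>. \<forall>b\<in>gcar \<Gamma>. \<forall>c\<in>gcar \<Gamma>.
         gd \<Gamma> a = gr \<Gamma> b \<longrightarrow> gd \<Gamma> b = gr \<Gamma> c \<longrightarrow>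
         gmul \<Gamma> (gmul \<Gamma> a b) c = gmul \<Gamma> a (gmul \<Gamma> b c))
   \<and> (\<forall>a\<in>gcar \<Gamma>. gmul \<Gamma> (gr \<Gamma> a) a = a \<and> gmul \<Gamma> a (gd \<Gamma> a) = a)
   \<and> (\<forall>a\<in>gcar \<Gamma>. ginv \<Gamma> a \<in> gcar \<Gamma> \<and> gd \<Gamma> (ginv \<Gamma> a) = gr \<Gamma> a
         \<and> gr \<Gamma> (ginv \<Gamma> a) = gd \<Gamma> a
         \<and> gmul \<Gamma> a (ginv \<Gamma> a) = gr \<Gamma> a \<and> gmul \<Gamma> (ginv \<Gamma> a) a = gd \<Gamma> a)"

definition topological_groupoid :: "'g topology \<Rightarrow> 'g groupoid \<Rightarrow> bool" where
  "topological_groupoid X \<Gamma> \<longleftrightarrow>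
     is_groupoid \<Gamma> \<and> topspace X = gcar \<Gamma>
   \<and> continuous_map X X (ginv \<Gamma>)
   \<and> continuous_map (subtopology (prod_topology X X) (composable \<Gamma>)) X
        (\<lambda>p. gmul \<Gamma> (fst p) (snd p))"

definition local_homeomorphism :: "'g topology \<Rightarrow> ('g \<Rightarrow> 'g) \<Rightarrow> bool" where
  "local_homeomorphism X f \<longleftrightarrow>
     (\<forall>x\<in>topspace X. \<exists>U. openin X U \<and> x \<in> U \<and> openin X (f ` U)
        \<and> homeomorphic_map (subtopology X U) (subtopology X (f ` U)) f)"

definition etale_groupoid :: "'g topology \<Rightarrow> 'g groupoid \<Rightarrow> bool" where
  "etale_groupoid X \<Gamma> \<longleftrightarrow> topological_groupoid X \<Gamma> \<and> local_homeomorphism X (gd \<Gamma>)"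

definition slice :: "'g topology \<Rightarrow> 'g groupoid \<Rightarrow> 'g set \<Rightarrow> bool" where
  "slice X \<Gamma> U \<longleftrightarrow> openin X U \<and> inj_on (gd \<Gamma>) U \<and> inj_on (gr \<Gamma>) U"

definition compact_open_slice :: "'g topology \<Rightarrow> 'g groupoid \<Rightarrow> 'g set \<Rightarrow> bool" where
  "compact_open_slice X \<Gamma> U \<longleftrightarrow> slice X \<Gamma> U \<and> compactin X U"

definition ample_groupoid :: "'g topology \<Rightarrow> 'g groupoid \<Rightarrow> bool" where
  "ample_groupoid X \<Gamma> \<longleftrightarrow> etale_groupoid X \<Gamma>
     \<and> (\<forall>W. openin X W \<longrightarrow> (\<forall>x\<in>W. \<exists>U. compact_open_slice X \<Gamma> U \<and> x \<in> U \<and> U \<subseteq> W))"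

definition isotropy :: "'g groupoid \<Rightarrow> 'g set" where
  "isotropy \<Gamma> = {a \<in> gcar \<Gamma>. gd \<Gamma> a = gr \<Gamma> a}"

definition effective :: "'g topology \<Rightarrow> 'g groupoid \<Rightarrow> bool" where
  "effective X \<Gamma> \<longleftrightarrow> X interior_of (isotropy \<Gamma>) = gunits \<Gamma>"

definition orbit :: "'g groupoid \<Rightarrow> 'g \<Rightarrow> 'g set" where
  "orbit \<Gamma> u = {gr \<Gamma> a | a. a \<in> gcar \<Gamma> \<and> gd \<Gamma> a = u}"

definition minimal :: "'g topology \<Rightarrow> 'g groupoid \<Rightarrow> bool" where
  "minimal X \<Gamma> \<longleftrightarrow>
     (\<forall>u\<in>gunits \<Gamma>. (subtopology X (gunits \<Gamma>)) closure_of (orbit \<Gamma> u) = gunits \<Gamma>)"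

text \<open>Values in the unit group of the field, i.e. nonzero; locally constant on G^(2)
  with the relative product topology.\<close>
definition continuous_2_cocycle ::
  "'g topology \<Rightarrow> 'g groupoid \<Rightarrow> ('g \<Rightarrow> 'g \<Rightarrow> 'k::field) \<Rightarrow> bool" where
  "continuous_2_cocycle X \<Gamma> \<nu> \<longleftrightarrow>
     (\<forall>(a, b)\<in>composable \<Gamma>. \<nu> a b \<noteq> 0)
   \<and> (\<forall>p\<in>composable \<Gamma>. \<exists>W. openin (subtopology (prod_topology X X) (composable \<Gamma>)) W
        \<and> p \<in> W \<and> (\<forall>q\<in>W. \<nu> (fst q) (snd q) = \<nu> (fst p) (snd p)))
   \<and> (\<forall>a\<in>gcar \<Gamma>. \<forall>b\<in>gcar \<Gamma>. \<forall>c\<in>gcar \<Gamma>.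
        gd \<Gamma> a = gr \<Gamma> b \<longrightarrow> gd \<Gamma> b = gr \<Gamma> c \<longrightarrow>
        \<nu> a b * \<nu> (gmul \<Gamma> a b) c = \<nu> a (gmul \<Gamma> b c) * \<nu> b c)"

definition normalized_cocycle :: "'g groupoid \<Rightarrow> ('g \<Rightarrow> 'g \<Rightarrow> 'k::field) \<Rightarrow> bool" where
  "normalized_cocycle \<Gamma> \<nu> \<longleftrightarrow>
     (\<forall>a\<in>gcar \<Gamma>. \<nu> a (gd \<Gamma> a) = 1 \<and> \<nu> (gd \<Gamma> (ginv \<Gamma> a)) a = 1)"

text \<open>As a set, A(G,nu) does not depend on nu; nu is an argument only to fix the field.\<close>
definition steinberg_algebra ::
  "'g topology \<Rightarrow> 'g groupoid \<Rightarrow> ('g \<Rightarrow> 'g \<Rightarrow> 'k::field) \<Rightarrow> ('g \<Rightarrow> 'k) set" where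
  "steinberg_algebra X \<Gamma> \<nu> =
     {f. \<exists>(n::nat) c U. (\<forall>i<n. compact_open_slice X \<Gamma> (U i))
          \<and> f = (\<lambda>x. \<Sum>i<n. if x \<in> U i then c i else 0)}"

text \<open>Twisted convolution; the sum runs over the (finite, for algebra elements)
  set of factorisations x = a b with nonzero contributions.\<close>
definition twisted_conv ::
  "'g groupoid \<Rightarrow> ('g \<Rightarrow> 'g \<Rightarrow> 'k::field) \<Rightarrow> ('g \<Rightarrow> 'k) \<Rightarrow> ('g \<Rightarrow> 'k) \<Rightarrow> 'g \<Rightarrow> 'k" where
  "twisted_conv \<Gamma> \<nu> f g x =
     (\<Sum>(a, b)\<in>{(a, b). (a, b) \<in> composable \<Gamma> \<and> gmul \<Gamma> a b = x \<and> f a \<noteq> 0 \<and> g b \<noteq> 0}.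
        \<nu> a b * f a * g b)"

definition char_fun :: "'g set \<Rightarrow> 'g \<Rightarrow> 'k::field" where
  "char_fun L = (\<lambda>x. if x \<in> L then 1 else 0)"

section \<open>Ring-theoretic notions, for a (non-unital) ring given by a carrier set
  of functions with pointwise addition and a multiplication\<close>

definition additive_subgroup :: "('g \<Rightarrow> 'k::field) set \<Rightarrow> bool" where
  "additive_subgroup I \<longleftrightarrow> (\<lambda>_. 0) \<in> I \<and> (\<forall>f\<in>I. \<forall>g\<in>I. (\<lambda>x. f x - g x) \<in> I)"

definition right_ideal ::
  "('g \<Rightarrow> 'k::field) set \<Rightarrow> (('g \<Rightarrow> 'k) \<Rightarrow> ('g \<Rightarrow> 'k) \<Rightarrow> ('g \<Rightarrow> 'k)) \<Rightarrow> ('g \<Rightarrow> 'k) set \<Rightarrow> bool" where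
  "right_ideal A m I \<longleftrightarrow> I \<subseteq> A \<and> additive_subgroup I \<and> (\<forall>f\<in>I. \<forall>a\<in>A. m f a \<in> I)"

definition two_sided_ideal ::
  "('g \<Rightarrow> 'k::field) set \<Rightarrow> (('g \<Rightarrow> 'k) \<Rightarrow> ('g \<Rightarrow> 'k) \<Rightarrow> ('g \<Rightarrow> 'k)) \<Rightarrow> ('g \<Rightarrow> 'k) set \<Rightarrow> bool" where
  "two_sided_ideal A m I \<longleftrightarrow> right_ideal A m I \<and> (\<forall>f\<in>I. \<forall>a\<in>A. m a f \<in> I)"

definition simple_ring ::
  "('g \<Rightarrow> 'k::field) set \<Rightarrow> (('g \<Rightarrow> 'k) \<Rightarrow> ('g \<Rightarrow> 'k) \<Rightarrow> ('g \<Rightarrow> 'k)) \<Rightarrow> bool" where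
  "simple_ring A m \<longleftrightarrow> (\<exists>a\<in>A. \<exists>b\<in>A. m a b \<noteq> (\<lambda>_. 0))
     \<and> (\<forall>I. two_sided_ideal A m I \<longrightarrow> I = {\<lambda>_. 0} \<or> I = A)"

definition idempotent ::
  "('g \<Rightarrow> 'k::field) set \<Rightarrow> (('g \<Rightarrow> 'k) \<Rightarrow> ('g \<Rightarrow> 'k) \<Rightarrow> ('g \<Rightarrow> 'k)) \<Rightarrow> ('g \<Rightarrow> 'k) \<Rightarrow> bool" where
  "idempotent A m p \<longleftrightarrow> p \<in> A \<and> m p p = p"

definition mvn_equiv ::
  "('g \<Rightarrow> 'k::field) set \<Rightarrow> (('g \<Rightarrow> 'k) \<Rightarrow> ('g \<Rightarrow> 'k) \<Rightarrow> ('g \<Rightarrow> 'k)) \<Rightarrow> ('g \<Rightarrow> 'k) \<Rightarrow> ('g \<Rightarrow> 'k) \<Rightarrow> bool" where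
  "mvn_equiv A m p q \<longleftrightarrow> (\<exists>x\<in>A. \<exists>y\<in>A.
       m (m p x) q = x \<and> m (m q y) p = y \<and> m x y = p \<and> m y x = q)"

definition subidempotent ::
  "('g \<Rightarrow> 'k::field) set \<Rightarrow> (('g \<Rightarrow> 'k) \<Rightarrow> ('g \<Rightarrow> 'k) \<Rightarrow> ('g \<Rightarrow> 'k)) \<Rightarrow> ('g \<Rightarrow> 'k) \<Rightarrow> ('g \<Rightarrow> 'k) \<Rightarrow> bool" where
  "subidempotent A m q p \<longleftrightarrow> idempotent A m q \<and> m p q = q \<and> m q p = q"

definition infinite_idempotent ::
  "('g \<Rightarrow> 'k::field) set \<Rightarrow> (('g \<Rightarrow> 'k) \<Rightarrow> ('g \<Rightarrow> 'k) \<Rightarrow> ('g \<Rightarrow> 'k)) \<Rightarrow> ('g \<Rightarrow> 'k) \<Rightarrow> bool" where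
  "infinite_idempotent A m p \<longleftrightarrow> idempotent A m p
     \<and> (\<exists>q. subidempotent A m q p \<and> q \<noteq> p \<and> mvn_equiv A m p q)"

definition simple_purely_infinite ::
  "('g \<Rightarrow> 'k::field) set \<Rightarrow> (('g \<Rightarrow> 'k) \<Rightarrow> ('g \<Rightarrow> 'k) \<Rightarrow> ('g \<Rightarrow> 'k)) \<Rightarrow> bool" where
  "simple_purely_infinite A m \<longleftrightarrow> simple_ring A m
     \<and> (\<forall>I. right_ideal A m I \<and> I \<noteq> {\<lambda>_. 0} \<longrightarrow> (\<exists>p\<in>I. infinite_idempotent A m p))"

end

theory Submission
  imports Defs
begin

text \<open>
  Let f be a nonzero element of a one-sided ideal. The interior of its support contains a
  compact open slice B, and g = f * 1_(B^-1) does not vanish on the open set r(B) of units.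
  Effectiveness lets us shrink r(B) to a nonempty compact open set K of units such that no
  non-unit arrow of the finitely many slices carrying g starts and ends in K, and on which g is
  constant, say equal to c. Then 1_K * g * 1_K = c 1_K, so e = g * c^-1 1_K lies in the ideal
  and satisfies e 1_K = e and 1_K e = 1_K. Such an e is an idempotent equivalent to 1_K and hence
  infinite, because 1_K is. If the ideal is two-sided it contains 1_K = 1_K e; by minimality
  every unit can be reached from K along an arrow, which spreads 1_K to characteristic functions
  of arbitrary compact open sets of units, and these generate the algebra as an ideal.
\<close>

lemma infinite_idempotent_transfer:
  fixes m :: "('g \<Rightarrow> 'k::field) \<Rightarrow> ('g \<Rightarrow> 'k) \<Rightarrow> 'g \<Rightarrow> 'k"
  assumes "A \<subseteq> S"
    and closed: "\<And>a b. a \<in> S \<Longrightarrow> b \<in> S \<Longrightarrow> m a b \<in> S"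
    and assoc: "\<And>a b c. a \<in> S \<Longrightarrow> b \<in> S \<Longrightarrow> c \<in> S \<Longrightarrow> m (m a b) c = m a (m b c)"
    and "e \<in> A" and e_mult: "\<And>a. a \<in> A \<Longrightarrow> m e a \<in> A"
    and ek: "m e k = e" and ke: "m k e = k"
    and k: "infinite_idempotent A m k"
  shows "infinite_idempotent A m e"
proof -
  obtain q x y where kk: "m k k = k"
    and q: "q \<in> A" "m q q = q" "m k q = q" "m q k = q" "q \<noteq> k"
    and xy: "x \<in> A" "y \<in> A" "m (m k x) q = x" "m (m q y) k = y" "m x y = k" "m y x = q"
    and "k \<in> A"
    using k unfolding infinite_idempotent_def subidempotent_def idempotent_def mvn_equiv_def
    by blast
  then have e: "e \<in> S" and k: "k \<in> S" and qS: "q \<in> S" and x: "x \<in> S" and y: "y \<in> S"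
    using \<open>A \<subseteq> S\<close> \<open>e \<in> A\<close> by auto
  have ee: "m e e = e" using assoc[OF e k e] by (simp add: ek ke)
  have qe: "m q e = q" using assoc[OF qS k e] by (simp add: q(4) ke)
  have xq: "m x q = x" using assoc[OF closed[OF k x] qS qS] by (simp add: xy(3) q(2))
  have xk: "m x k = x" using assoc[OF x qS k] by (simp add: xq q(4))
  have xe: "m x e = x" using assoc[OF x k e] by (simp add: xk ke)
  have qy: "m q y = y"
    using assoc[OF qS closed[OF qS y] k] assoc[OF qS qS y, symmetric] by (simp add: xy(4) q(2))
  have yk: "m y k = y" using assoc[OF closed[OF qS y] k k] by (simp add: xy(4) kk)
  have ye: "m y e = y" using assoc[OF y k e] by (simp add: yk ke)
  (* The proper subidempotent of e is e q, equivalent to e via e x and e y. *)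
  have idem: "m (m e q) (m e q) = m e q"
    using assoc[OF e qS closed[OF e qS]] assoc[OF qS e qS, symmetric] by (simp add: qe q(2))
  have sub: "m e (m e q) = m e q" "m (m e q) e = m e q"
    using assoc[OF e e qS, symmetric] assoc[OF e qS e] by (simp_all add: ee qe)
  have proper: "m e q \<noteq> e"
  proof
    assume "m e q = e"
    then have "k = q" using assoc[OF k e qS, symmetric] by (simp add: ke q(3))
    then show False using q(5) by simp
  qed
  have "m (m e (m e x)) (m e q) = m e x"
    using assoc[OF e e x, symmetric] assoc[OF e x closed[OF e qS]] assoc[OF x e qS, symmetric]
    by (simp add: ee xe xq)
  moreover have "m (m (m e q) (m e y)) e = m e y"
    using assoc[OF e qS closed[OF e y]] assoc[OF qS e y, symmetric] assoc[OF e y e]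
    by (simp add: qe qy ye)
  moreover have "m (m e x) (m e y) = e"
    using assoc[OF e x closed[OF e y]] assoc[OF x e y, symmetric] by (simp add: xe xy(5) ek)
  moreover have "m (m e y) (m e x) = m e q"
    using assoc[OF e y closed[OF e x]] assoc[OF y e x, symmetric] by (simp add: ye xy(6))
  ultimately have "mvn_equiv A m e (m e q)"
    unfolding mvn_equiv_def using e_mult xy(1,2) by blast
  then show ?thesis
    using \<open>e \<in> A\<close> e_mult q(1) ee idem sub proper
    unfolding infinite_idempotent_def subidempotent_def idempotent_def by auto
qed

lemma openin_shrink_finite:
  assumes "finite F"
    and shrink: "\<And>W S. W \<in> F \<Longrightarrow> openin X S \<Longrightarrow> S \<noteq> {} \<Longrightarrow> S \<subseteq> T \<Longrightarrow>
      \<exists>S'. openin X S' \<and> S' \<noteq> {} \<and> S' \<subseteq> S \<and> P W S'"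
    and mono: "\<And>W S S'. W \<in> F \<Longrightarrow> S' \<subseteq> S \<Longrightarrow> P W S \<Longrightarrow> P W S'"
    and "openin X S" "S \<noteq> {}" "S \<subseteq> T"
  shows "\<exists>S'. openin X S' \<and> S' \<noteq> {} \<and> S' \<subseteq> S \<and> (\<forall>W\<in>F. P W S')"
  using assms(1) shrink mono assms(4-6)
proof (induction F arbitrary: S rule: finite_induct)
  case empty
  show ?case using empty.prems(3,4) by blast
next
  case (insert W F)
  obtain S1 where S1: "openin X S1" "S1 \<noteq> {}" "S1 \<subseteq> S" "P W S1"
    using insert.prems(1)[of W S] insert.prems(3-5) by blast
  have "\<exists>S'. openin X S' \<and> S' \<noteq> {} \<and> S' \<subseteq> S1 \<and> (\<forall>W'\<in>F. P W' S')"
  proof (rule insert.IH)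
    show "S1 \<subseteq> T" using S1(3) insert.prems(5) by blast
  qed (use insert.prems(1,2) S1 in blast)+
  then obtain S2 where S2: "openin X S2" "S2 \<noteq> {}" "S2 \<subseteq> S1" "\<forall>W'\<in>F. P W' S2"
    by blast
  have "P W S2" using insert.prems(2)[of W S2 S1] S1(4) S2(3) by blast
  then show ?case using S1(3) S2 by blast
qed

lemma openin_refine_inside_or_disjoint:
  assumes "finite F" "\<And>W. W \<in> F \<Longrightarrow> openin X W" "openin X S" "S \<noteq> {}"
  shows "\<exists>S'. openin X S' \<and> S' \<noteq> {} \<and> S' \<subseteq> S \<and> (\<forall>W\<in>F. S' \<subseteq> W \<or> S' \<inter> W = {})"
proof (rule openin_shrink_finite[of F X "topspace X"])
  fix W S assume "W \<in> F" "openin X S" "S \<noteq> {}"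
  then show "\<exists>S'. openin X S' \<and> S' \<noteq> {} \<and> S' \<subseteq> S \<and> (S' \<subseteq> W \<or> S' \<inter> W = {})"
    using assms(2) by (cases "S \<inter> W = {}") blast+
qed (use assms openin_subset in blast)+

lemma additive_subgroup_add:
  assumes "additive_subgroup I" "f \<in> I" "g \<in> I"
  shows "(\<lambda>x. f x + g x) \<in> I"
proof -
  have zero: "(\<lambda>_. 0) \<in> I" and diff: "\<And>f g. f \<in> I \<Longrightarrow> g \<in> I \<Longrightarrow> (\<lambda>x. f x - g x) \<in> I"
    using assms(1) unfolding additive_subgroup_def by auto
  have "(\<lambda>x. f x - (0 - g x)) \<in> I" using diff[OF assms(2) diff[OF zero assms(3)]] .
  then show ?thesis by simp
qed

definition scaled_char :: "'k::zero \<Rightarrow> 'g set \<Rightarrow> 'g \<Rightarrow> 'k" where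
  "scaled_char c K x = (if x \<in> K then c else 0)"

lemma char_fun_eq_scaled_char: "char_fun K = scaled_char 1 K"
  unfolding char_fun_def scaled_char_def by auto

locale twisted_ample_groupoid =
  fixes X :: "'g topology" and \<Gamma> :: "'g groupoid" and \<nu> :: "'g \<Rightarrow> 'g \<Rightarrow> 'k::field"
  assumes ample: "ample_groupoid X \<Gamma>"
    and units_Hausdorff: "Hausdorff_space (subtopology X (gunits \<Gamma>))"
    and cocycle: "continuous_2_cocycle X \<Gamma> \<nu>"
    and normalized: "normalized_cocycle \<Gamma> \<nu>"
    and effective: "effective X \<Gamma>"
begin

abbreviation "G \<equiv> gcar \<Gamma>"
abbreviation "G0 \<equiv> gunits \<Gamma>"
abbreviation "d \<equiv> gd \<Gamma>"
abbreviation "r \<equiv> gr \<Gamma>"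
abbreviation "iv \<equiv> ginv \<Gamma>"
abbreviation gmult (infixl "\<cdot>" 70) where "a \<cdot> b \<equiv> gmul \<Gamma> a b"
abbreviation conv (infixl "\<star>" 70) where "f \<star> g \<equiv> twisted_conv \<Gamma> \<nu> f g"
abbreviation "A \<equiv> steinberg_algebra X \<Gamma> \<nu>"

lemma groupoid: "is_groupoid \<Gamma>"
  using ample unfolding ample_groupoid_def etale_groupoid_def topological_groupoid_def by blast

lemma units_subset: "G0 \<subseteq> G"
  and unit_in_G [simp]: "u \<in> G0 \<Longrightarrow> u \<in> G"
  and d_in_units [simp]: "a \<in> G \<Longrightarrow> d a \<in> G0"
  and r_in_units [simp]: "a \<in> G \<Longrightarrow> r a \<in> G0"
  and d_unit [simp]: "u \<in> G0 \<Longrightarrow> d u = u"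
  and r_unit [simp]: "u \<in> G0 \<Longrightarrow> r u = u"
  and mult_closed [simp]: "a \<in> G \<Longrightarrow> b \<in> G \<Longrightarrow> d a = r b \<Longrightarrow> a \<cdot> b \<in> G"
  and d_mult [simp]: "a \<in> G \<Longrightarrow> b \<in> G \<Longrightarrow> d a = r b \<Longrightarrow> d (a \<cdot> b) = d b"
  and r_mult [simp]: "a \<in> G \<Longrightarrow> b \<in> G \<Longrightarrow> d a = r b \<Longrightarrow> r (a \<cdot> b) = r a"
  and mult_assoc: "a \<in> G \<Longrightarrow> b \<in> G \<Longrightarrow> c \<in> G \<Longrightarrow> d a = r b \<Longrightarrow> d b = r c \<Longrightarrow>
     (a \<cdot> b) \<cdot> c = a \<cdot> (b \<cdot> c)"
  and r_mult_left [simp]: "a \<in> G \<Longrightarrow> r a \<cdot> a = a"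
  and mult_d_right [simp]: "a \<in> G \<Longrightarrow> a \<cdot> d a = a"
  and iv_closed [simp]: "a \<in> G \<Longrightarrow> iv a \<in> G"
  and d_iv [simp]: "a \<in> G \<Longrightarrow> d (iv a) = r a"
  and r_iv [simp]: "a \<in> G \<Longrightarrow> r (iv a) = d a"
  and mult_iv_right [simp]: "a \<in> G \<Longrightarrow> a \<cdot> iv a = r a"
  and iv_mult_left [simp]: "a \<in> G \<Longrightarrow> iv a \<cdot> a = d a"
  using groupoid unfolding is_groupoid_def by blast+

lemma iv_mult_cancel [simp]:
  assumes "a \<in> G" "b \<in> G" "d a = r b"
  shows "iv a \<cdot> (a \<cdot> b) = b"
  using assms by (simp flip: mult_assoc)

lemma mult_iv_cancel [simp]:
  assumes "a \<in> G" "b \<in> G" "d a = r b"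
  shows "(a \<cdot> b) \<cdot> iv b = a"
  using assms by (simp add: mult_assoc flip: assms(3))

lemma mult_in_units_imp_eq_iv:
  assumes "a \<in> G" "b \<in> G" "d a = r b" "a \<cdot> b \<in> G0"
  shows "a = iv b"
proof -
  have "a \<cdot> b = d b" using d_unit[OF assms(4)] d_mult[OF assms(1-3)] by simp
  have "a = (a \<cdot> b) \<cdot> iv b" using assms by simp
  also have "\<dots> = iv b" using \<open>a \<cdot> b = d b\<close> r_mult_left[of "iv b"] assms by simp
  finally show ?thesis .
qed

lemma iv_iv [simp]: "a \<in> G \<Longrightarrow> iv (iv a) = a"
  using mult_in_units_imp_eq_iv[of a "iv a"] by simp

lemma nu_nonzero: "a \<in> G \<Longrightarrow> b \<in> G \<Longrightarrow> d a = r b \<Longrightarrow> \<nu> a b \<noteq> 0"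
  using cocycle unfolding continuous_2_cocycle_def composable_def by auto

lemma nu_d_right [simp]: "a \<in> G \<Longrightarrow> \<nu> a (d a) = 1"
  and nu_r_left [simp]: "a \<in> G \<Longrightarrow> \<nu> (r a) a = 1"
  using normalized unfolding normalized_cocycle_def by (metis d_iv)+

lemma nu_cocycle:
  "a \<in> G \<Longrightarrow> b \<in> G \<Longrightarrow> c \<in> G \<Longrightarrow> d a = r b \<Longrightarrow> d b = r c \<Longrightarrow>
   \<nu> a b * \<nu> (a \<cdot> b) c = \<nu> a (b \<cdot> c) * \<nu> b c"
  using cocycle unfolding continuous_2_cocycle_def by blast

lemma composable_iff [simp]: "(a, b) \<in> composable \<Gamma> \<longleftrightarrow> a \<in> G \<and> b \<in> G \<and> d a = r b"
  unfolding composable_def by simp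

lemma twisted_conv_nonzero_factorization:
  assumes "(f \<star> g) z \<noteq> 0"
  obtains a b where "a \<in> G" "b \<in> G" "d a = r b" "a \<cdot> b = z" "f a \<noteq> 0" "g b \<noteq> 0"
proof -
  let ?P = "{(a, b). (a, b) \<in> composable \<Gamma> \<and> a \<cdot> b = z \<and> f a \<noteq> 0 \<and> g b \<noteq> 0}"
  have "?P \<noteq> {}"
  proof
    assume "?P = {}"
    then have "(f \<star> g) z = 0" unfolding twisted_conv_def by (simp only: sum.empty)
    then show False using assms by simp
  qed
  then obtain a b where "(a, b) \<in> ?P" by blast
  then have "a \<in> G" "b \<in> G" "d a = r b" "a \<cdot> b = z" "f a \<noteq> 0" "g b \<noteq> 0" by simp_all
  then show ?thesis by (rule that)
qed

lemma twisted_conv_outside_G: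
  assumes "z \<notin> G"
  shows "(f \<star> g) z = 0"
proof (rule ccontr)
  assume "(f \<star> g) z \<noteq> 0"
  then obtain a b where "a \<in> G" "b \<in> G" "d a = r b" "a \<cdot> b = z"
    by (rule twisted_conv_nonzero_factorization)
  then show False using assms by (metis mult_closed)
qed

lemma twisted_conv_sum_superset:
  assumes "finite P"
    and factor_in: "\<And>a b. a \<in> G \<Longrightarrow> b \<in> G \<Longrightarrow> d a = r b \<Longrightarrow> a \<cdot> b = z \<Longrightarrow>
      f a \<noteq> 0 \<Longrightarrow> g b \<noteq> 0 \<Longrightarrow> (a, b) \<in> P"
    and in_factor: "\<And>a b. (a, b) \<in> P \<Longrightarrow> a \<in> G \<and> b \<in> G \<and> d a = r b \<and> a \<cdot> b = z"
  shows "(f \<star> g) z = (\<Sum>(a, b)\<in>P. \<nu> a b * f a * g b)"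
  unfolding twisted_conv_def
proof (rule sum.mono_neutral_left)
  let ?Z = "{(a, b). (a, b) \<in> composable \<Gamma> \<and> a \<cdot> b = z \<and> f a \<noteq> 0 \<and> g b \<noteq> 0}"
  show "?Z \<subseteq> P"
  proof
    fix p assume "p \<in> ?Z"
    then obtain a b where "p = (a, b)" "a \<in> G" "b \<in> G" "d a = r b" "a \<cdot> b = z" "f a \<noteq> 0" "g b \<noteq> 0"
      by auto
    then show "p \<in> P" using factor_in[of a b] by simp
  qed
  show "\<forall>p\<in>P - ?Z. (case p of (a, b) \<Rightarrow> \<nu> a b * f a * g b) = 0"
  proof
    fix p assume p: "p \<in> P - ?Z"
    obtain a b where "p = (a, b)" by (cases p)
    with p in_factor[of a b] have "f a = 0 \<or> g b = 0" by simp
    then show "(case p of (a, b) \<Rightarrow> \<nu> a b * f a * g b) = 0" using \<open>p = (a, b)\<close> by auto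
  qed
qed fact

lemma twisted_conv_single_factorization:
  assumes unique: "\<And>a b. a \<in> G \<Longrightarrow> b \<in> G \<Longrightarrow> d a = r b \<Longrightarrow> a \<cdot> b = z \<Longrightarrow>
      f a \<noteq> 0 \<Longrightarrow> g b \<noteq> 0 \<Longrightarrow> a = a0 \<and> b = b0"
    and "a0 \<in> G" "b0 \<in> G" "d a0 = r b0" "a0 \<cdot> b0 = z"
  shows "(f \<star> g) z = \<nu> a0 b0 * f a0 * g b0"
proof -
  have "(f \<star> g) z = (\<Sum>(a, b)\<in>{(a0, b0)}. \<nu> a b * f a * g b)"
  proof (rule twisted_conv_sum_superset)
    fix a b assume "a \<in> G" "b \<in> G" "d a = r b" "a \<cdot> b = z" "f a \<noteq> 0" "g b \<noteq> 0"
    from unique[OF this] show "(a, b) \<in> {(a0, b0)}" by simp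
  qed (use assms(2-) in auto)
  then show ?thesis by simp
qed

lemma conv_unit_supported_left:
  assumes "\<And>x. \<phi> x \<noteq> 0 \<Longrightarrow> x \<in> G0"
  shows "(\<phi> \<star> h) z = (if z \<in> G then \<phi> (r z) * h z else 0)"
proof (cases "z \<in> G")
  case True
  have "(\<phi> \<star> h) z = \<nu> (r z) z * \<phi> (r z) * h z"
  proof (rule twisted_conv_single_factorization)
    fix a b assume ab: "a \<in> G" "b \<in> G" "d a = r b" "a \<cdot> b = z" "\<phi> a \<noteq> 0"
    then have "a = r b" using assms d_unit by metis
    then show "a = r z \<and> b = z" using ab by auto
  qed (use True in auto)
  then show ?thesis using True by simp
next
  case False
  then show ?thesis by (simp add: twisted_conv_outside_G)
qed

lemma conv_unit_supported_right:
  assumes "\<And>x. \<phi> x \<noteq> 0 \<Longrightarrow> x \<in> G0"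
  shows "(h \<star> \<phi>) z = (if z \<in> G then h z * \<phi> (d z) else 0)"
proof (cases "z \<in> G")
  case True
  have "(h \<star> \<phi>) z = \<nu> z (d z) * h z * \<phi> (d z)"
  proof (rule twisted_conv_single_factorization)
    fix a b assume ab: "a \<in> G" "b \<in> G" "d a = r b" "a \<cdot> b = z" "h a \<noteq> 0" "\<phi> b \<noteq> 0"
    then have "b = d a" using assms r_unit by metis
    then show "a = z \<and> b = d z" using ab by auto
  qed (use True in auto)
  then show ?thesis using True by simp
next
  case False
  then show ?thesis by (simp add: twisted_conv_outside_G)
qed

lemma conv_scaled_char_units_left:
  assumes "K \<subseteq> G0"
  shows "(scaled_char c K \<star> h) z = (if z \<in> G \<and> r z \<in> K then c * h z else 0)"
  using assms by (subst conv_unit_supported_left) (auto simp: scaled_char_def split: if_splits)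

lemma conv_scaled_char_units_right:
  assumes "K \<subseteq> G0"
  shows "(h \<star> scaled_char c K) z = (if z \<in> G \<and> d z \<in> K then h z * c else 0)"
  using assms by (subst conv_unit_supported_right) (auto simp: scaled_char_def split: if_splits)

lemma scaled_char_units_conv:
  assumes "K \<subseteq> G0" "L \<subseteq> G0"
  shows "scaled_char a K \<star> scaled_char b L = scaled_char (a * b) (K \<inter> L)"
proof
  fix z
  show "(scaled_char a K \<star> scaled_char b L) z = scaled_char (a * b) (K \<inter> L) z"
    unfolding conv_scaled_char_units_left[OF assms(1)] using assms by (auto simp: scaled_char_def)
qed

lemma conv_char_inverse_at_range:
  assumes "B \<subseteq> G" "inj_on r B" "b \<in> B"
  shows "(f \<star> scaled_char 1 (iv ` B)) (r b) = \<nu> b (iv b) * f b"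
proof -
  have "b \<in> G" using assms by auto
  have "(f \<star> scaled_char 1 (iv ` B)) (r b) = \<nu> b (iv b) * f b * scaled_char 1 (iv ` B) (iv b)"
  proof (rule twisted_conv_single_factorization)
    fix a c assume ac: "a \<in> G" "c \<in> G" "d a = r c" "a \<cdot> c = r b" "scaled_char (1::'k) (iv ` B) c \<noteq> 0"
    then obtain b' where b': "b' \<in> B" "c = iv b'" by (auto simp: scaled_char_def split: if_splits)
    have "b' \<in> G" using b' assms by auto
    have "a = b'" using mult_in_units_imp_eq_iv[of a c] ac b' \<open>b' \<in> G\<close> \<open>b \<in> G\<close> by simp
    moreover have "r a = r b"
      using r_mult[of a c] ac \<open>b \<in> G\<close> by simp
    ultimately have "b' = b" by (intro inj_onD[OF assms(2) _ b'(1) assms(3)]) simp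
    then show "a = b \<and> c = iv b" using \<open>a = b'\<close> b' by simp
  qed (use \<open>b \<in> G\<close> in auto)
  then show ?thesis using assms(3) by (simp add: scaled_char_def)
qed

lemma char_inverse_conv_char:
  assumes "C \<subseteq> G" "inj_on d C" "inj_on r C" and const: "\<And>b. b \<in> C \<Longrightarrow> \<nu> (iv b) b = c"
  shows "scaled_char 1 (iv ` C) \<star> scaled_char 1 C = scaled_char c (d ` C)"
proof
  fix z
  have factor: "a = iv b \<and> z = d b \<and> b \<in> C"
    if ab: "a \<in> G" "b \<in> G" "d a = r b" "a \<cdot> b = z"
      "scaled_char (1::'k) (iv ` C) a \<noteq> 0" "scaled_char (1::'k) C b \<noteq> 0" for a b
  proof -
    have "a \<in> iv ` C" "b \<in> C" using ab(5,6) by (auto simp: scaled_char_def split: if_splits)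
    then obtain b' where b': "b' \<in> C" "a = iv b'" by blast
    then have "r b' = r b" using ab assms(1) by auto
    then have "b' = b" by (rule inj_onD[OF assms(3) _ b'(1) \<open>b \<in> C\<close>])
    then show ?thesis using ab b' \<open>b \<in> C\<close> by simp
  qed
  show "(scaled_char 1 (iv ` C) \<star> scaled_char 1 C) z = scaled_char c (d ` C) z"
  proof (cases "z \<in> d ` C")
    case True
    then obtain b where b: "b \<in> C" "z = d b" by blast
    have "(scaled_char 1 (iv ` C) \<star> scaled_char 1 C) z
        = \<nu> (iv b) b * scaled_char 1 (iv ` C) (iv b) * scaled_char (1::'k) C b"
    proof (rule twisted_conv_single_factorization)
      fix a b' assume "a \<in> G" "b' \<in> G" "d a = r b'" "a \<cdot> b' = z"
        "scaled_char (1::'k) (iv ` C) a \<noteq> 0" "scaled_char (1::'k) C b' \<noteq> 0"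
      from factor[OF this] have "a = iv b'" "d b' = d b" "b' \<in> C" using b(2) by simp_all
      moreover from this have "b' = b" by (intro inj_onD[OF assms(2) _ _ b(1)])
      ultimately show "a = iv b \<and> b' = b" by blast
    qed (use assms(1) b in auto)
    also have "\<dots> = c" using b const by (simp add: scaled_char_def)
    finally show ?thesis using True by (simp add: scaled_char_def)
  next
    case False
    have "(scaled_char 1 (iv ` C) \<star> scaled_char (1::'k) C) z = 0"
    proof (rule ccontr)
      assume "(scaled_char 1 (iv ` C) \<star> scaled_char (1::'k) C) z \<noteq> 0"
      then obtain a b where "a \<in> G" "b \<in> G" "d a = r b" "a \<cdot> b = z"
          "scaled_char (1::'k) (iv ` C) a \<noteq> 0" "scaled_char (1::'k) C b \<noteq> 0"
        by (rule twisted_conv_nonzero_factorization)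
      from factor[OF this] have "z = d b" "b \<in> C" by simp_all
      then show False using False by blast
    qed
    then show ?thesis using False by (simp add: scaled_char_def)
  qed
qed

subsection \<open>Associativity\<close>

text \<open>
  Associativity is proved for functions with finitely many nonzero values on each range fibre:
  this class contains the Steinberg algebra and is closed under convolution, and on it all sums
  in the convolution are finite.
\<close>

definition fibrewise_finite :: "('g \<Rightarrow> 'k) \<Rightarrow> bool" where
  "fibrewise_finite f \<longleftrightarrow> (\<forall>v. finite {a \<in> G. r a = v \<and> f a \<noteq> 0})"

lemma fibrewise_finite_conv:
  assumes "fibrewise_finite f" "fibrewise_finite g"
  shows "fibrewise_finite (f \<star> g)"
  unfolding fibrewise_finite_def
proof
  fix v
  let ?F = "{a \<in> G. r a = v \<and> f a \<noteq> 0}"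
  have "{c \<in> G. r c = v \<and> (f \<star> g) c \<noteq> 0}
      \<subseteq> (\<lambda>(a, b). a \<cdot> b) ` (SIGMA a:?F. {b \<in> G. r b = d a \<and> g b \<noteq> 0})"
  proof
    fix c assume c: "c \<in> {c \<in> G. r c = v \<and> (f \<star> g) c \<noteq> 0}"
    then obtain a b where "a \<in> G" "b \<in> G" "d a = r b" "a \<cdot> b = c" "f a \<noteq> 0" "g b \<noteq> 0"
      by (blast elim: twisted_conv_nonzero_factorization)
    then show "c \<in> (\<lambda>(a, b). a \<cdot> b) ` (SIGMA a:?F. {b \<in> G. r b = d a \<and> g b \<noteq> 0})"
      using c by (intro image_eqI[of _ _ "(a, b)"]) auto
  qed
  moreover have "finite (SIGMA a:?F. {b \<in> G. r b = d a \<and> g b \<noteq> 0})"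
    using assms unfolding fibrewise_finite_def by blast
  ultimately show "finite {c \<in> G. r c = v \<and> (f \<star> g) c \<noteq> 0}"
    by (meson finite_imageI finite_subset)
qed

definition triple_factorizations ::
  "('g \<Rightarrow> 'k) \<Rightarrow> ('g \<Rightarrow> 'k) \<Rightarrow> ('g \<Rightarrow> 'k) \<Rightarrow> 'g \<Rightarrow> ('g \<times> 'g \<times> 'g) set" where
  "triple_factorizations f g h x = {(a, b, c). a \<in> G \<and> b \<in> G \<and> c \<in> G \<and> d a = r b \<and> d b = r c
     \<and> (a \<cdot> b) \<cdot> c = x \<and> f a \<noteq> 0 \<and> g b \<noteq> 0 \<and> h c \<noteq> 0}"

lemma finite_triple_factorizations:
  assumes "fibrewise_finite f" "fibrewise_finite g"
  shows "finite (triple_factorizations f g h x)"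
proof -
  let ?S = "SIGMA a:{a \<in> G. r a = r x \<and> f a \<noteq> 0}. {b \<in> G. r b = d a \<and> g b \<noteq> 0}"
  have "triple_factorizations f g h x \<subseteq> (\<lambda>(a, b). (a, b, iv (a \<cdot> b) \<cdot> x)) ` ?S"
  proof clarify
    fix a b c assume "(a, b, c) \<in> triple_factorizations f g h x"
    then have abc: "a \<in> G" "b \<in> G" "c \<in> G" "d a = r b" "d b = r c" "(a \<cdot> b) \<cdot> c = x"
        "f a \<noteq> 0" "g b \<noteq> 0"
      unfolding triple_factorizations_def by auto
    then have "iv (a \<cdot> b) \<cdot> x = c" "r x = r a" by auto
    then show "(a, b, c) \<in> (\<lambda>(a, b). (a, b, iv (a \<cdot> b) \<cdot> x)) ` ?S"
      using abc by (intro image_eqI[of _ _ "(a, b)"]) auto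
  qed
  moreover have "finite ?S"
    using assms unfolding fibrewise_finite_def by blast
  ultimately show ?thesis by (meson finite_imageI finite_subset)
qed

lemma triple_sum_fibre_left:
  assumes "(p, c) \<in> (\<lambda>(a, b, c). (a \<cdot> b, c)) ` triple_factorizations f g h x"
  shows "(\<Sum>t\<in>{t. t \<in> triple_factorizations f g h x \<and> (\<lambda>(a, b, c). (a \<cdot> b, c)) t = (p, c)}.
      (\<lambda>(a, b, c). \<nu> a b * \<nu> (a \<cdot> b) c * f a * g b * h c) t) = \<nu> p c * (f \<star> g) p * h c"
proof -
  let ?T = "triple_factorizations f g h x"
  let ?Q = "{(a, b). (a, b) \<in> composable \<Gamma> \<and> a \<cdot> b = p \<and> f a \<noteq> 0 \<and> g b \<noteq> 0}"
  from assms obtain a0 b0 where "(a0, b0, c) \<in> ?T" "p = a0 \<cdot> b0" by auto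
  then have pc: "c \<in> G" "d p = r c" "p \<cdot> c = x" "h c \<noteq> 0"
    unfolding triple_factorizations_def by auto
  have "{t. t \<in> ?T \<and> (\<lambda>(a, b, c). (a \<cdot> b, c)) t = (p, c)} = (\<lambda>(a, b). (a, b, c)) ` ?Q"
  proof (intro equalityI subsetI)
    fix t assume t: "t \<in> {t. t \<in> ?T \<and> (\<lambda>(a, b, c). (a \<cdot> b, c)) t = (p, c)}"
    obtain a b c' where "t = (a, b, c')" by (cases t)
    with t have "t = (a, b, c)" "(a, b, c) \<in> ?T" "a \<cdot> b = p" by auto
    then show "t \<in> (\<lambda>(a, b). (a, b, c)) ` ?Q"
      unfolding triple_factorizations_def by auto
  next
    fix t assume "t \<in> (\<lambda>(a, b). (a, b, c)) ` ?Q"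
    then obtain a b where ab: "t = (a, b, c)" "a \<in> G" "b \<in> G" "d a = r b" "a \<cdot> b = p"
        "f a \<noteq> 0" "g b \<noteq> 0"
      by auto
    then have "d b = r c" using pc(2) by auto
    then show "t \<in> {t. t \<in> ?T \<and> (\<lambda>(a, b, c). (a \<cdot> b, c)) t = (p, c)}"
      using ab pc unfolding triple_factorizations_def by auto
  qed
  then have "(\<Sum>t\<in>{t. t \<in> ?T \<and> (\<lambda>(a, b, c). (a \<cdot> b, c)) t = (p, c)}.
      (\<lambda>(a, b, c). \<nu> a b * \<nu> (a \<cdot> b) c * f a * g b * h c) t)
      = (\<Sum>(a, b)\<in>?Q. \<nu> p c * h c * (\<nu> a b * f a * g b))"
    by (simp add: sum.reindex inj_on_def case_prod_unfold mult_ac)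
  also have "\<dots> = \<nu> p c * (f \<star> g) p * h c"
    by (simp add: twisted_conv_def sum_distrib_left case_prod_unfold mult_ac)
  finally show ?thesis .
qed

lemma conv_conv_left_eq_sum:
  assumes "fibrewise_finite f" "fibrewise_finite g"
  shows "((f \<star> g) \<star> h) x
    = (\<Sum>(a, b, c)\<in>triple_factorizations f g h x. \<nu> a b * \<nu> (a \<cdot> b) c * f a * g b * h c)"
proof -
  let ?T = "triple_factorizations f g h x"
  let ?F = "\<lambda>(a, b, c). \<nu> a b * \<nu> (a \<cdot> b) c * f a * g b * h c"
  let ?\<pi> = "\<lambda>(a, b, c). (a \<cdot> b, c)"
  have fin: "finite ?T" using assms by (rule finite_triple_factorizations)
  have "((f \<star> g) \<star> h) x = (\<Sum>(p, c)\<in>?\<pi> ` ?T. \<nu> p c * (f \<star> g) p * h c)"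
  proof (rule twisted_conv_sum_superset)
    fix p c assume pc: "p \<in> G" "c \<in> G" "d p = r c" "p \<cdot> c = x" "(f \<star> g) p \<noteq> 0" "h c \<noteq> 0"
    then obtain a b where ab: "a \<in> G" "b \<in> G" "d a = r b" "a \<cdot> b = p" "f a \<noteq> 0" "g b \<noteq> 0"
      by (blast elim: twisted_conv_nonzero_factorization)
    then have "(a, b, c) \<in> ?T"
      using pc unfolding triple_factorizations_def by auto
    then show "(p, c) \<in> ?\<pi> ` ?T" using ab(4) by force
  next
    fix p c assume "(p, c) \<in> ?\<pi> ` ?T"
    then obtain a b where "(a, b, c) \<in> ?T" "p = a \<cdot> b" by auto
    then show "p \<in> G \<and> c \<in> G \<and> d p = r c \<and> p \<cdot> c = x"
      unfolding triple_factorizations_def by auto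
  qed (use fin in simp)
  also have "\<dots> = (\<Sum>pc\<in>?\<pi> ` ?T. \<Sum>t\<in>{t. t \<in> ?T \<and> ?\<pi> t = pc}. ?F t)"
  proof (rule sum.cong[OF refl])
    fix pc assume "pc \<in> ?\<pi> ` ?T"
    moreover obtain p c where "pc = (p, c)" by (cases pc)
    ultimately show "(case pc of (p, c) \<Rightarrow> \<nu> p c * (f \<star> g) p * h c)
        = (\<Sum>t\<in>{t. t \<in> ?T \<and> ?\<pi> t = pc}. ?F t)"
      using triple_sum_fibre_left[of p c] by simp
  qed
  also have "\<dots> = (\<Sum>t\<in>?T. ?F t)"
    by (rule sum.image_gen[OF fin, symmetric])
  finally show ?thesis .
qed

lemma triple_sum_fibre_right:
  assumes "(a, q) \<in> (\<lambda>(a, b, c). (a, b \<cdot> c)) ` triple_factorizations f g h x"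
  shows "(\<Sum>t\<in>{t. t \<in> triple_factorizations f g h x \<and> (\<lambda>(a, b, c). (a, b \<cdot> c)) t = (a, q)}.
      (\<lambda>(a, b, c). \<nu> a (b \<cdot> c) * \<nu> b c * f a * g b * h c) t) = \<nu> a q * f a * (g \<star> h) q"
proof -
  let ?T = "triple_factorizations f g h x"
  let ?Q = "{(b, c). (b, c) \<in> composable \<Gamma> \<and> b \<cdot> c = q \<and> g b \<noteq> 0 \<and> h c \<noteq> 0}"
  have T_iff: "(a, b, c) \<in> ?T \<longleftrightarrow> a \<in> G \<and> b \<in> G \<and> c \<in> G \<and> d a = r b \<and> d b = r c
      \<and> a \<cdot> (b \<cdot> c) = x \<and> f a \<noteq> 0 \<and> g b \<noteq> 0 \<and> h c \<noteq> 0" for a b c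
    unfolding triple_factorizations_def by (auto simp: mult_assoc)
  from assms obtain b0 c0 where "(a, b0, c0) \<in> ?T" "q = b0 \<cdot> c0" by auto
  then have aq: "a \<in> G" "d a = r q" "a \<cdot> q = x" "f a \<noteq> 0"
    unfolding T_iff by auto
  have "{t. t \<in> ?T \<and> (\<lambda>(a, b, c). (a, b \<cdot> c)) t = (a, q)} = (\<lambda>(b, c). (a, b, c)) ` ?Q"
  proof (intro equalityI subsetI)
    fix t assume t: "t \<in> {t. t \<in> ?T \<and> (\<lambda>(a, b, c). (a, b \<cdot> c)) t = (a, q)}"
    obtain a' b c where "t = (a', b, c)" by (cases t)
    with t have "t = (a, b, c)" "(a, b, c) \<in> ?T" "b \<cdot> c = q" by auto
    then show "t \<in> (\<lambda>(b, c). (a, b, c)) ` ?Q"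
      unfolding T_iff by auto
  next
    fix t assume "t \<in> (\<lambda>(b, c). (a, b, c)) ` ?Q"
    then obtain b c where bc: "t = (a, b, c)" "b \<in> G" "c \<in> G" "d b = r c" "b \<cdot> c = q"
        "g b \<noteq> 0" "h c \<noteq> 0"
      by auto
    then have "d a = r b" using aq(2) by auto
    then have "(a, b, c) \<in> ?T" unfolding T_iff using bc aq by auto
    then show "t \<in> {t. t \<in> ?T \<and> (\<lambda>(a, b, c). (a, b \<cdot> c)) t = (a, q)}" using bc(1,5) by simp
  qed
  then have "(\<Sum>t\<in>{t. t \<in> ?T \<and> (\<lambda>(a, b, c). (a, b \<cdot> c)) t = (a, q)}.
      (\<lambda>(a, b, c). \<nu> a (b \<cdot> c) * \<nu> b c * f a * g b * h c) t)
      = (\<Sum>(b, c)\<in>?Q. \<nu> a q * f a * (\<nu> b c * g b * h c))"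
    by (simp add: sum.reindex inj_on_def case_prod_unfold mult_ac)
  also have "\<dots> = \<nu> a q * f a * (g \<star> h) q"
    by (simp add: twisted_conv_def sum_distrib_left case_prod_unfold mult_ac)
  finally show ?thesis .
qed

lemma conv_conv_right_eq_sum:
  assumes "fibrewise_finite f" "fibrewise_finite g"
  shows "(f \<star> (g \<star> h)) x
    = (\<Sum>(a, b, c)\<in>triple_factorizations f g h x. \<nu> a (b \<cdot> c) * \<nu> b c * f a * g b * h c)"
proof -
  let ?T = "triple_factorizations f g h x"
  let ?F = "\<lambda>(a, b, c). \<nu> a (b \<cdot> c) * \<nu> b c * f a * g b * h c"
  let ?\<pi> = "\<lambda>(a, b, c). (a, b \<cdot> c)"
  have fin: "finite ?T" using assms by (rule finite_triple_factorizations)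
  have "(f \<star> (g \<star> h)) x = (\<Sum>(a, q)\<in>?\<pi> ` ?T. \<nu> a q * f a * (g \<star> h) q)"
  proof (rule twisted_conv_sum_superset)
    fix a q assume aq: "a \<in> G" "q \<in> G" "d a = r q" "a \<cdot> q = x" "f a \<noteq> 0" "(g \<star> h) q \<noteq> 0"
    then obtain b c where bc: "b \<in> G" "c \<in> G" "d b = r c" "b \<cdot> c = q" "g b \<noteq> 0" "h c \<noteq> 0"
      by (blast elim: twisted_conv_nonzero_factorization)
    then have "(a, b, c) \<in> ?T"
      using aq unfolding triple_factorizations_def by (auto simp: mult_assoc)
    then show "(a, q) \<in> ?\<pi> ` ?T" using bc(4) by force
  next
    fix a q assume "(a, q) \<in> ?\<pi> ` ?T"
    then obtain b c where "(a, b, c) \<in> ?T" "q = b \<cdot> c" by auto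
    then show "a \<in> G \<and> q \<in> G \<and> d a = r q \<and> a \<cdot> q = x"
      unfolding triple_factorizations_def by (auto simp: mult_assoc)
  qed (use fin in simp)
  also have "\<dots> = (\<Sum>aq\<in>?\<pi> ` ?T. \<Sum>t\<in>{t. t \<in> ?T \<and> ?\<pi> t = aq}. ?F t)"
  proof (rule sum.cong[OF refl])
    fix aq assume "aq \<in> ?\<pi> ` ?T"
    moreover obtain a q where "aq = (a, q)" by (cases aq)
    ultimately show "(case aq of (a, q) \<Rightarrow> \<nu> a q * f a * (g \<star> h) q)
        = (\<Sum>t\<in>{t. t \<in> ?T \<and> ?\<pi> t = aq}. ?F t)"
      using triple_sum_fibre_right[of a q] by simp
  qed
  also have "\<dots> = (\<Sum>t\<in>?T. ?F t)"
    by (rule sum.image_gen[OF fin, symmetric])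
  finally show ?thesis .
qed

lemma twisted_conv_assoc:
  assumes "fibrewise_finite f" "fibrewise_finite g"
  shows "(f \<star> g) \<star> h = f \<star> (g \<star> h)"
proof
  fix x
  show "((f \<star> g) \<star> h) x = (f \<star> (g \<star> h)) x"
    unfolding conv_conv_left_eq_sum[OF assms] conv_conv_right_eq_sum[OF assms]
  proof (rule sum.cong[OF refl], clarify)
    fix a b c assume "(a, b, c) \<in> triple_factorizations f g h x"
    then have "\<nu> a b * \<nu> (a \<cdot> b) c = \<nu> a (b \<cdot> c) * \<nu> b c"
      unfolding triple_factorizations_def by (auto intro: nu_cocycle)
    then show "\<nu> a b * \<nu> (a \<cdot> b) c * f a * g b * h c = \<nu> a (b \<cdot> c) * \<nu> b c * f a * g b * h c"
      by simp
  qed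
qed

subsection \<open>Topology of the ample groupoid\<close>

lemma topspace_eq: "topspace X = G"
  using ample unfolding ample_groupoid_def etale_groupoid_def topological_groupoid_def by blast

lemma openin_subset_G: "openin X W \<Longrightarrow> W \<subseteq> G"
  using openin_subset topspace_eq by blast

lemma compact_open_sliceD:
  assumes "compact_open_slice X \<Gamma> U"
  shows "openin X U" "compactin X U" "inj_on d U" "inj_on r U" "U \<subseteq> G"
  using assms openin_subset_G unfolding compact_open_slice_def slice_def by blast+

lemma continuous_map_iv: "continuous_map X X iv"
  and continuous_map_mult:
    "continuous_map (subtopology (prod_topology X X) (composable \<Gamma>)) X (\<lambda>p. fst p \<cdot> snd p)"
  using ample unfolding ample_groupoid_def etale_groupoid_def topological_groupoid_def by blast+

lemma d_local_homeomorphism: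
  assumes "x \<in> G"
  obtains U where "openin X U" "x \<in> U" "openin X (d ` U)"
    "homeomorphic_map (subtopology X U) (subtopology X (d ` U)) d"
  using ample assms topspace_eq
  unfolding ample_groupoid_def etale_groupoid_def local_homeomorphism_def by metis

lemma continuous_map_d: "continuous_map X X d"
proof (rule pasting_lemma)
  let ?I = "{U. openin X U \<and> homeomorphic_map (subtopology X U) (subtopology X (d ` U)) d}"
  show "openin X (id U)" if "U \<in> ?I" for U using that by simp
  show "continuous_map (subtopology X (id U)) X d" if "U \<in> ?I" for U
    using that homeomorphic_imp_continuous_map continuous_map_into_fulltopology by fastforce
  show "\<exists>U. U \<in> ?I \<and> x \<in> id U \<and> d x = d x" if "x \<in> topspace X" for x
    using that topspace_eq by (metis (mono_tags, lifting) d_local_homeomorphism id_apply mem_Collect_eq)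
qed simp

lemma openin_d_image:
  assumes "openin X W"
  shows "openin X (d ` W)"
proof (subst openin_subopen, intro ballI)
  fix y assume "y \<in> d ` W"
  then obtain x where x: "x \<in> W" "y = d x" by auto
  then obtain U where U: "openin X U" "x \<in> U" "openin X (d ` U)"
      "homeomorphic_map (subtopology X U) (subtopology X (d ` U)) d"
    using d_local_homeomorphism openin_subset_G[OF assms] by blast
  have "openin (subtopology X U) (W \<inter> U)"
    using assms U(1) by (simp add: openin_open_subtopology openin_Int)
  then have "openin (subtopology X (d ` U)) (d ` (W \<inter> U))"
    using homeomorphic_imp_open_map[OF U(4)] unfolding open_map_def by blast
  then have "openin X (d ` (W \<inter> U))" using U(3) openin_trans_full by blast
  then show "\<exists>T. openin X T \<and> y \<in> T \<and> T \<subseteq> d ` W" using x U(2) by blast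
qed

lemma openin_iv_image:
  assumes "openin X W"
  shows "openin X (iv ` W)"
proof -
  have "iv ` W = {x \<in> topspace X. iv x \<in> W}"
  proof (intro equalityI subsetI)
    fix x assume "x \<in> iv ` W"
    then show "x \<in> {x \<in> topspace X. iv x \<in> W}"
      using openin_subset_G[OF assms] topspace_eq by auto
  next
    fix x assume x: "x \<in> {x \<in> topspace X. iv x \<in> W}"
    then have "x = iv (iv x)" using topspace_eq by simp
    then show "x \<in> iv ` W" using x by blast
  qed
  then show ?thesis
    using openin_continuous_map_preimage[OF continuous_map_iv assms] by simp
qed

lemma continuous_map_r: "continuous_map X X r"
proof -
  have "continuous_map X X (d \<circ> iv)"
    using continuous_map_compose[OF continuous_map_iv continuous_map_d] .
  then show ?thesis by (rule continuous_map_eq) (simp add: topspace_eq)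
qed

lemma openin_r_image:
  assumes "openin X W"
  shows "openin X (r ` W)"
proof -
  have "r ` W = d ` (iv ` W)"
    using openin_subset_G[OF assms] by (force simp: image_iff)
  then show ?thesis using openin_d_image[OF openin_iv_image[OF assms]] by simp
qed

lemma openin_preimage:
  "continuous_map X X f \<Longrightarrow> openin X U \<Longrightarrow> openin X {x \<in> G. f x \<in> U}"
  using openin_continuous_map_preimage topspace_eq by fastforce

lemma openin_units: "openin X G0"
  using effective unfolding effective_def by (metis openin_interior_of)

lemma openin_units_iff: "K \<subseteq> G0 \<Longrightarrow> openin (subtopology X G0) K \<longleftrightarrow> openin X K"
  using openin_open_subtopology[OF openin_units] by blast

lemma ample_basis:
  assumes "openin X W" "x \<in> W"
  obtains U where "compact_open_slice X \<Gamma> U" "x \<in> U" "U \<subseteq> W"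
  using ample assms unfolding ample_groupoid_def by blast

lemma compact_open_slice_units:
  assumes "openin X K" "compactin X K" "K \<subseteq> G0"
  shows "compact_open_slice X \<Gamma> K"
proof -
  have "inj_on d K" "inj_on r K"
    using assms(3) by (auto intro!: inj_onI simp: subset_iff)
  then show ?thesis using assms unfolding compact_open_slice_def slice_def by blast
qed

lemma compact_open_slice_iv_image:
  assumes "compact_open_slice X \<Gamma> B"
  shows "compact_open_slice X \<Gamma> (iv ` B)"
proof -
  note B = compact_open_sliceD[OF assms]
  have "inj_on d (iv ` B)"
    using B(4,5) by (auto intro!: inj_onI dest: inj_onD simp: subset_iff)
  moreover have "inj_on r (iv ` B)"
    using B(3,5) by (auto intro!: inj_onI dest: inj_onD simp: subset_iff)
  ultimately show ?thesis
    using openin_iv_image[OF B(1)] image_compactin[OF B(2) continuous_map_iv]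
    unfolding compact_open_slice_def slice_def by blast
qed

lemma compact_open_slice_d_image:
  assumes "compact_open_slice X \<Gamma> C"
  shows "compact_open_slice X \<Gamma> (d ` C)" "d ` C \<subseteq> G0"
proof -
  note C = compact_open_sliceD[OF assms]
  show "d ` C \<subseteq> G0" using C(5) by auto
  then show "compact_open_slice X \<Gamma> (d ` C)"
    using openin_d_image[OF C(1)] image_compactin[OF C(2) continuous_map_d]
    by (intro compact_open_slice_units)
qed

lemma units_separation:
  assumes "u \<in> G0" "v \<in> G0" "u \<noteq> v"
  obtains P Q where "openin X P" "openin X Q" "u \<in> P" "v \<in> Q" "P \<inter> Q = {}"
proof -
  have "topspace (subtopology X G0) = G0" using units_subset topspace_eq by auto
  then obtain P Q where "openin (subtopology X G0) P" "openin (subtopology X G0) Q"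
      "u \<in> P" "v \<in> Q" "disjnt P Q"
    using units_Hausdorff assms unfolding Hausdorff_space_def by metis
  then show ?thesis
    using that openin_units openin_trans_full by (metis disjnt_def)
qed

lemma compact_open_units_diff:
  assumes "openin X L" "compactin X L" "L \<subseteq> G0" "openin X K" "compactin X K" "K \<subseteq> G0"
  shows "openin X (L - K)" "compactin X (L - K)"
proof -
  let ?T = "subtopology X G0"
  have "closedin ?T K"
    using compactin_imp_closedin[OF units_Hausdorff] assms(5,6) by (simp add: compactin_subtopology)
  then have "openin ?T (L - K)"
    using assms(1,3) openin_units_iff by blast
  then show "openin X (L - K)"
    using openin_units openin_trans_full by blast
  have "closedin ?T (L - K)"
    using assms(2,3,4,6) \<open>closedin ?T K\<close> compactin_imp_closedin[OF units_Hausdorff] openin_units_iff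
    by (simp add: compactin_subtopology closedin_diff)
  then have "compactin ?T (L - K)"
    using closed_compactin assms(2,3) by (metis Diff_subset compactin_subtopology)
  then show "compactin X (L - K)" by (simp add: compactin_subtopology)
qed

lemma continuous_map_r_section:
  assumes "openin X U" "inj_on r U"
  shows "continuous_map (subtopology X (r ` U)) X (the_inv_into U r)"
proof -
  have U: "U \<subseteq> G" using openin_subset_G[OF assms(1)] .
  have "open_map (subtopology X U) (subtopology X (r ` U)) r"
    unfolding open_map_def
  proof (intro allI impI)
    fix W assume "openin (subtopology X U) W"
    then have "openin X W" "W \<subseteq> U"
      using assms(1) openin_open_subtopology by blast+
    then show "openin (subtopology X (r ` U)) (r ` W)"
      using openin_r_image by (simp add: subset_openin_subtopology image_mono)
  qed
  moreover have "topspace (subtopology X U) = U" "topspace (subtopology X (r ` U)) = r ` U"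
    using U topspace_eq by auto
  ultimately have "continuous_map (subtopology X (r ` U)) (subtopology X U) (the_inv_into U r)"
    using open_eq_continuous_inverse_map[of "subtopology X U" r "subtopology X (r ` U)"]
    by (simp add: assms(2) the_inv_into_f_f f_the_inv_into_f the_inv_into_into)
  then show ?thesis using continuous_map_into_fulltopology by blast
qed

definition set_mult :: "'g set \<Rightarrow> 'g set \<Rightarrow> 'g set" where
  "set_mult U V = {a \<cdot> b | a b. a \<in> U \<and> b \<in> V \<and> d a = r b}"

lemma continuous_map_translate_by_r_section:
  assumes U: "openin X U" "inj_on r U"
  shows "continuous_map (subtopology X {z \<in> G. r z \<in> r ` U}) X
    (\<lambda>z. iv (the_inv_into U r (r z)) \<cdot> z)"
proof -
  let ?s = "the_inv_into U r"
  let ?D = "{z \<in> G. r z \<in> r ` U}"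
  have D: "topspace (subtopology X ?D) = ?D" using topspace_eq by auto
  have "continuous_map (subtopology X ?D) (subtopology X (r ` U)) r"
    using continuous_map_from_subtopology[OF continuous_map_r] D
    by (auto intro: continuous_map_into_subtopology)
  then have "continuous_map (subtopology X ?D) X (iv \<circ> (?s \<circ> r))"
    by (intro continuous_map_compose[OF _ continuous_map_iv]
        continuous_map_compose[OF _ continuous_map_r_section[OF U]])
  then have "continuous_map (subtopology X ?D) (prod_topology X X) (\<lambda>z. (iv (?s (r z)), z))"
    by (simp add: continuous_map_paired continuous_map_from_subtopology comp_def)
  moreover have "(\<lambda>z. (iv (?s (r z)), z)) \<in> topspace (subtopology X ?D) \<rightarrow> composable \<Gamma>"
  proof
    fix z assume "z \<in> topspace (subtopology X ?D)"
    then have "z \<in> G" "?s (r z) \<in> G" "r (?s (r z)) = r z"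
      using D U(2) openin_subset_G[OF U(1)] by (auto simp: f_the_inv_into_f the_inv_into_into)
    then show "(iv (?s (r z)), z) \<in> composable \<Gamma>" by simp
  qed
  ultimately have "continuous_map (subtopology X ?D) (subtopology (prod_topology X X) (composable \<Gamma>))
      (\<lambda>z. (iv (?s (r z)), z))"
    by (rule continuous_map_into_subtopology)
  from continuous_map_compose[OF this continuous_map_mult] show ?thesis
    by (simp add: comp_def)
qed

lemma openin_set_mult:
  assumes U: "openin X U" "inj_on r U" and V: "openin X V"
  shows "openin X (set_mult U V)"
proof -
  let ?s = "the_inv_into U r"
  let ?D = "{z \<in> G. r z \<in> r ` U}"
  have UG: "U \<subseteq> G" using openin_subset_G[OF U(1)] .
  have D: "openin X ?D" "topspace (subtopology X ?D) = ?D"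
    using openin_preimage[OF continuous_map_r openin_r_image[OF U(1)]] topspace_eq by auto
  have "openin (subtopology X ?D) {z \<in> ?D. iv (?s (r z)) \<cdot> z \<in> V}"
    using openin_continuous_map_preimage[OF continuous_map_translate_by_r_section[OF U] V] D(2)
    by (simp add: topspace_eq)
  then have "openin X {z \<in> ?D. iv (?s (r z)) \<cdot> z \<in> V}"
    using D(1) openin_trans_full by blast
  moreover have "set_mult U V = {z \<in> ?D. iv (?s (r z)) \<cdot> z \<in> V}"
  proof (intro equalityI subsetI)
    fix z assume "z \<in> set_mult U V"
    then obtain a b where ab: "z = a \<cdot> b" "a \<in> U" "b \<in> V" "d a = r b"
      unfolding set_mult_def by blast
    then have "a \<in> G" "b \<in> G" using UG openin_subset_G[OF V] by auto
    then have "?s (r z) = a" using ab U(2) by (simp add: the_inv_into_f_f)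
    then show "z \<in> {z \<in> ?D. iv (?s (r z)) \<cdot> z \<in> V}"
      using ab \<open>a \<in> G\<close> \<open>b \<in> G\<close> by auto
  next
    fix z assume z: "z \<in> {z \<in> ?D. iv (?s (r z)) \<cdot> z \<in> V}"
    let ?a = "?s (r z)"
    have a: "?a \<in> U" "r ?a = r z" "?a \<in> G" "z \<in> G"
      using z U(2) UG by (auto simp: f_the_inv_into_f the_inv_into_into)
    then have "?a \<cdot> (iv ?a \<cdot> z) = (?a \<cdot> iv ?a) \<cdot> z"
      by (intro mult_assoc[symmetric]) simp_all
    then have "z = ?a \<cdot> (iv ?a \<cdot> z)" "d ?a = r (iv ?a \<cdot> z)"
      using a by simp_all
    then show "z \<in> set_mult U V"
      unfolding set_mult_def using a z by blast
  qed
  ultimately show ?thesis by simp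
qed

lemma inj_on_d_set_mult:
  assumes "U \<subseteq> G" "V \<subseteq> G" "inj_on d U" "inj_on d V"
  shows "inj_on d (set_mult U V)"
proof (rule inj_onI)
  fix x y assume "x \<in> set_mult U V" "y \<in> set_mult U V" "d x = d y"
  then obtain a b a' b' where ab: "x = a \<cdot> b" "a \<in> U" "b \<in> V" "d a = r b"
    and ab': "y = a' \<cdot> b'" "a' \<in> U" "b' \<in> V" "d a' = r b'"
    unfolding set_mult_def by blast
  have "a \<in> G" "b \<in> G" "a' \<in> G" "b' \<in> G" using ab ab' assms(1,2) by auto
  then have "d b = d b'" using \<open>d x = d y\<close> ab ab' by simp
  then have "b = b'" using inj_onD[OF assms(4) _ ab(3) ab'(3)] by blast
  then have "d a = d a'" using ab(4) ab'(4) by simp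
  then have "a = a'" using inj_onD[OF assms(3) _ ab(2) ab'(2)] by blast
  then show "x = y" using ab(1) ab'(1) \<open>b = b'\<close> by simp
qed

lemma nu_locally_constant:
  assumes p: "continuous_map X (subtopology (prod_topology X X) (composable \<Gamma>)) p" and "y \<in> G"
  obtains W where "openin X W" "y \<in> W"
    "\<And>y'. y' \<in> W \<Longrightarrow> \<nu> (fst (p y')) (snd (p y')) = \<nu> (fst (p y)) (snd (p y))"
proof -
  have "p y \<in> composable \<Gamma>"
    using continuous_map_image_subset_topspace[OF p] assms(2) topspace_eq by auto
  then obtain W where W: "openin (subtopology (prod_topology X X) (composable \<Gamma>)) W" "p y \<in> W"
      "\<forall>q\<in>W. \<nu> (fst q) (snd q) = \<nu> (fst (p y)) (snd (p y))"
    using cocycle unfolding continuous_2_cocycle_def by blast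
  have "openin X {x \<in> topspace X. p x \<in> W}"
    by (rule openin_continuous_map_preimage[OF p W(1)])
  then show ?thesis
    using that W(2,3) assms(2) topspace_eq by (metis (mono_tags, lifting) mem_Collect_eq)
qed

lemma continuous_map_pair_iv:
  "continuous_map X (subtopology (prod_topology X X) (composable \<Gamma>)) (\<lambda>b. (b, iv b))"
  "continuous_map X (subtopology (prod_topology X X) (composable \<Gamma>)) (\<lambda>b. (iv b, b))"
  using continuous_map_iv topspace_eq
  by (auto intro!: continuous_map_into_subtopology simp: continuous_map_paired)

lemma steinberg_algebraE:
  assumes "f \<in> A"
  obtains n U c where "\<And>i. i < n \<Longrightarrow> compact_open_slice X \<Gamma> (U i)"
    "f = (\<lambda>x. \<Sum>i<(n::nat). scaled_char (c i) (U i) x)"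
proof -
  obtain n c U where "\<forall>i<(n::nat). compact_open_slice X \<Gamma> (U i)"
    "f = (\<lambda>x. \<Sum>i<n. if x \<in> U i then c i else 0)"
    using assms unfolding steinberg_algebra_def by blast
  then show ?thesis using that[of n U c] by (simp add: scaled_char_def)
qed

lemma scaled_char_in_steinberg: "compact_open_slice X \<Gamma> U \<Longrightarrow> scaled_char c U \<in> A"
  unfolding steinberg_algebra_def scaled_char_def
  by (intro CollectI exI[of _ 1] exI[of _ "\<lambda>_. c"] exI[of _ "\<lambda>_. U"]) auto

lemma sum_scaled_char_nonzero:
  assumes "(\<Sum>i<(n::nat). scaled_char (c i) (U i) x) \<noteq> 0"
  obtains i where "i < n" "x \<in> U i"
proof -
  obtain i where "i < n" "scaled_char (c i) (U i) x \<noteq> 0"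
    using sum.not_neutral_contains_not_neutral[OF assms] by auto
  then show ?thesis using that by (auto simp: scaled_char_def split: if_splits)
qed

lemma steinberg_fibrewise_finite:
  assumes "f \<in> A"
  shows "fibrewise_finite f"
  unfolding fibrewise_finite_def
proof
  fix v
  obtain n U c where U: "\<And>i. i < n \<Longrightarrow> compact_open_slice X \<Gamma> (U i)"
    and f: "f = (\<lambda>x. \<Sum>i<(n::nat). scaled_char (c i) (U i) x)"
    using assms by (blast elim: steinberg_algebraE)
  have "{a \<in> G. r a = v \<and> f a \<noteq> 0} \<subseteq> (\<Union>i<n. {a \<in> U i. r a = v})"
  proof
    fix a assume "a \<in> {a \<in> G. r a = v \<and> f a \<noteq> 0}"
    then have "r a = v" "(\<Sum>i<n. scaled_char (c i) (U i) a) \<noteq> 0" using f by auto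
    then show "a \<in> (\<Union>i<n. {a \<in> U i. r a = v})"
      by (auto elim: sum_scaled_char_nonzero)
  qed
  moreover have "finite {a \<in> U i. r a = v}" if "i < n" for i
  proof -
    have "inj_on r (U i)" using compact_open_sliceD(4)[OF U[OF that]] .
    then have "{a \<in> U i. r a = v} \<subseteq> the_inv_into (U i) r ` {v}"
      by (auto simp: the_inv_into_f_f)
    then show ?thesis by (rule finite_subset) simp
  qed
  then have "finite (\<Union>i<n. {a \<in> U i. r a = v})" by simp
  ultimately show "finite {a \<in> G. r a = v \<and> f a \<noteq> 0}"
    by (rule finite_subset)
qed

subsection \<open>Corners at compact open sets of units\<close>

text \<open>
  If some arrow of V over S is not in the isotropy, separate its source from its range and pass
  to the sources of a small neighbourhood of it; otherwise the part of V over S is an open set of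
  isotropy, which consists of units by effectiveness.
\<close>

lemma shrink_avoiding_nonunits:
  assumes V: "openin X V" "inj_on d V" and S: "openin X S" "S \<subseteq> G0" "S \<noteq> {}"
  shows "\<exists>S'. openin X S' \<and> S' \<noteq> {} \<and> S' \<subseteq> S \<and> (\<forall>z\<in>V. d z \<in> S' \<and> r z \<in> S' \<longrightarrow> z \<in> G0)"
proof (cases "\<exists>z\<in>V. d z \<in> S \<and> r z \<noteq> d z")
  case True
  then obtain z where z: "z \<in> V" "d z \<in> S" "r z \<noteq> d z" by blast
  have "z \<in> G" using z(1) openin_subset_G[OF V(1)] by blast
  then obtain P Q where PQ: "openin X P" "openin X Q" "d z \<in> P" "r z \<in> Q" "P \<inter> Q = {}"
    using units_separation[of "d z" "r z"] z(3) by auto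
  define W where "W = V \<inter> {w \<in> G. d w \<in> P \<inter> S} \<inter> {w \<in> G. r w \<in> Q}"
  have "openin X W"
    unfolding W_def using V(1) S(1) PQ(1,2)
    by (intro openin_Int openin_preimage continuous_map_d continuous_map_r) auto
  moreover have "z \<in> W" unfolding W_def using z \<open>z \<in> G\<close> PQ by auto
  moreover have "y \<in> G0" if y: "y \<in> V" "d y \<in> d ` W" "r y \<in> d ` W" for y
  proof -
    obtain w where "w \<in> W" "d y = d w" using y(2) by auto
    then have "y = w" using inj_onD[OF V(2)] y(1) unfolding W_def by blast
    then have "r y \<in> Q" "r y \<in> P" using \<open>w \<in> W\<close> y(3) unfolding W_def by auto
    then show ?thesis using PQ(5) by blast
  qed
  moreover have "d ` W \<subseteq> S" unfolding W_def by auto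
  ultimately show ?thesis
    using openin_d_image[OF \<open>openin X W\<close>] by (intro exI[of _ "d ` W"]) blast
next
  case False
  define W where "W = V \<inter> {w \<in> G. d w \<in> S}"
  have "openin X W"
    unfolding W_def using V(1) S(1) by (intro openin_Int openin_preimage continuous_map_d)
  moreover have "W \<subseteq> isotropy \<Gamma>"
    unfolding W_def isotropy_def using False by auto
  ultimately have "W \<subseteq> G0"
    using interior_of_maximal effective unfolding effective_def by metis
  have "z \<in> G0" if "z \<in> V" "d z \<in> S" "r z \<in> S" for z
    using that openin_subset_G[OF V(1)] \<open>W \<subseteq> G0\<close> unfolding W_def by blast
  then show ?thesis using S by blast
qed

lemma shrink_avoiding_nonunits_finite:
  assumes "finite VV" "\<And>V. V \<in> VV \<Longrightarrow> openin X V \<and> inj_on d V"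
    and "openin X S" "S \<subseteq> G0" "S \<noteq> {}"
  shows "\<exists>S'. openin X S' \<and> S' \<noteq> {} \<and> S' \<subseteq> S
    \<and> (\<forall>V\<in>VV. \<forall>z\<in>V. d z \<in> S' \<and> r z \<in> S' \<longrightarrow> z \<in> G0)"
proof (rule openin_shrink_finite[of VV X G0])
  fix V S assume "V \<in> VV" "openin X S" "S \<noteq> {}" "S \<subseteq> G0"
  with assms(2)[OF \<open>V \<in> VV\<close>] show "\<exists>S'. openin X S' \<and> S' \<noteq> {} \<and> S' \<subseteq> S
      \<and> (\<forall>z\<in>V. d z \<in> S' \<and> r z \<in> S' \<longrightarrow> z \<in> G0)"
    by (intro shrink_avoiding_nonunits) auto
qed (use assms in blast)+

lemma exists_scalar_corner:
  assumes VV: "finite VV" "\<And>V. V \<in> VV \<Longrightarrow> openin X V \<and> inj_on d V"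
    and supp: "\<And>z. h z \<noteq> 0 \<Longrightarrow> z \<in> \<Union>VV"
    and Om: "openin X Om" "Om \<subseteq> G0" "Om \<noteq> {}"
    and nonzero: "\<And>v. v \<in> Om \<Longrightarrow> h v \<noteq> 0"
    and densely_constant: "\<And>S. openin X S \<Longrightarrow> S \<noteq> {} \<Longrightarrow> S \<subseteq> Om \<Longrightarrow>
      \<exists>S'. openin X S' \<and> S' \<noteq> {} \<and> S' \<subseteq> S \<and> (\<forall>x\<in>S'. \<forall>y\<in>S'. h x = h y)"
  obtains K c where "compact_open_slice X \<Gamma> K" "K \<subseteq> G0" "K \<noteq> {}" "c \<noteq> 0"
    "\<And>z. z \<in> G \<Longrightarrow> r z \<in> K \<Longrightarrow> d z \<in> K \<Longrightarrow> h z = scaled_char c K z"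
proof -
  obtain S1 where S1: "openin X S1" "S1 \<noteq> {}" "S1 \<subseteq> Om"
      "\<forall>V\<in>VV. \<forall>z\<in>V. d z \<in> S1 \<and> r z \<in> S1 \<longrightarrow> z \<in> G0"
    using shrink_avoiding_nonunits_finite[OF VV Om] by blast
  obtain S2 where S2: "openin X S2" "S2 \<noteq> {}" "S2 \<subseteq> S1" "\<forall>x\<in>S2. \<forall>y\<in>S2. h x = h y"
    using densely_constant[OF S1(1,2,3)] by blast
  obtain v where "v \<in> S2" using S2(2) by blast
  then obtain K where K: "compact_open_slice X \<Gamma> K" "v \<in> K" "K \<subseteq> S2"
    using ample_basis[OF S2(1)] by blast
  have KG0: "K \<subseteq> G0" using K(3) S2(3) S1(3) Om(2) by blast
  show ?thesis
  proof (rule that[OF K(1) KG0 _ nonzero])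
    show "K \<noteq> {}" "v \<in> Om" using K(2,3) S2(3) S1(3) by auto
    fix z assume z: "z \<in> G" "r z \<in> K" "d z \<in> K"
    show "h z = scaled_char (h v) K z"
    proof (cases "z \<in> G0")
      case True
      then have "z \<in> K" using z(2) by simp
      then show ?thesis using S2(4) K(2,3) by (auto simp: scaled_char_def)
    next
      case False
      have "h z = 0"
      proof (rule ccontr)
        assume "h z \<noteq> 0"
        then obtain V where "V \<in> VV" "z \<in> V" using supp by blast
        then show False using S1(4) z K(3) S2(3) False by blast
      qed
      moreover have "z \<notin> K" using False KG0 by blast
      ultimately show ?thesis by (simp add: scaled_char_def)
    qed
  qed
qed

lemma conv_char_inverse_support_cover:
  assumes "f \<in> A" "compact_open_slice X \<Gamma> B"
  shows "\<exists>VV. finite VV \<and> (\<forall>V\<in>VV. openin X V \<and> inj_on d V)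
    \<and> (\<forall>z. (f \<star> scaled_char 1 (iv ` B)) z \<noteq> 0 \<longrightarrow> z \<in> \<Union>VV)"
proof -
  obtain n U c where U: "\<And>i. i < n \<Longrightarrow> compact_open_slice X \<Gamma> (U i)"
    and f: "f = (\<lambda>x. \<Sum>i<(n::nat). scaled_char (c i) (U i) x)"
    using assms(1) by (blast elim: steinberg_algebraE)
  note B' = compact_open_sliceD[OF compact_open_slice_iv_image[OF assms(2)]]
  let ?VV = "(\<lambda>i. set_mult (U i) (iv ` B)) ` {..<n}"
  have "openin X V \<and> inj_on d V" if V: "V \<in> ?VV" for V
  proof -
    obtain i where "i < n" "V = set_mult (U i) (iv ` B)" using V by blast
    moreover note Ui = compact_open_sliceD[OF U[OF \<open>i < n\<close>]]
    ultimately show ?thesis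
      using openin_set_mult[OF Ui(1,4) B'(1)] inj_on_d_set_mult[OF Ui(5) B'(5) Ui(3) B'(3)] by simp
  qed
  moreover have "z \<in> \<Union>?VV" if z: "(f \<star> scaled_char 1 (iv ` B)) z \<noteq> 0" for z
  proof -
    obtain a b where ab: "a \<in> G" "b \<in> G" "d a = r b" "a \<cdot> b = z"
        "f a \<noteq> 0" "scaled_char (1::'k) (iv ` B) b \<noteq> 0"
      using z by (rule twisted_conv_nonzero_factorization)
    obtain i where "i < n" "a \<in> U i"
      using ab(5) f by (auto elim: sum_scaled_char_nonzero)
    moreover have "b \<in> iv ` B" using ab(6) by (simp add: scaled_char_def split: if_splits)
    ultimately have "z \<in> set_mult (U i) (iv ` B)"
      unfolding set_mult_def using ab(3,4) by blast
    then show ?thesis using \<open>i < n\<close> by blast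
  qed
  ultimately show ?thesis by (intro exI[of _ ?VV]) auto
qed

lemma conv_char_inverse_densely_constant:
  assumes "f \<in> A" "compact_open_slice X \<Gamma> B" "openin X S" "S \<noteq> {}" "S \<subseteq> r ` B"
  shows "\<exists>S'. openin X S' \<and> S' \<noteq> {} \<and> S' \<subseteq> S \<and>
    (\<forall>x\<in>S'. \<forall>y\<in>S'. (f \<star> scaled_char 1 (iv ` B)) x = (f \<star> scaled_char 1 (iv ` B)) y)"
proof -
  obtain n U c where U: "\<And>i. i < n \<Longrightarrow> compact_open_slice X \<Gamma> (U i)"
    and f: "f = (\<lambda>x. \<Sum>i<(n::nat). scaled_char (c i) (U i) x)"
    using assms(1) by (blast elim: steinberg_algebraE)
  note Bs = compact_open_sliceD[OF assms(2)]
  let ?BS = "B \<inter> {b \<in> G. r b \<in> S}"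
  have "openin X ?BS"
    using Bs(1) assms(3) by (intro openin_Int openin_preimage continuous_map_r)
  obtain v where "v \<in> S" using assms(4) by blast
  then obtain b0 where "b0 \<in> B" "r b0 = v" using assms(5) by blast
  then have "b0 \<in> ?BS" using Bs(5) \<open>v \<in> S\<close> by blast
  then obtain W where W: "openin X W" "b0 \<in> W" "\<And>b. b \<in> W \<Longrightarrow> \<nu> b (iv b) = \<nu> b0 (iv b0)"
    using nu_locally_constant[OF continuous_map_pair_iv(1), of b0] by auto
  have "\<exists>P. openin X P \<and> P \<noteq> {} \<and> P \<subseteq> ?BS \<inter> W \<and> (\<forall>V\<in>U ` {..<n}. P \<subseteq> V \<or> P \<inter> V = {})"
  proof (rule openin_refine_inside_or_disjoint)
    show "openin X V" if "V \<in> U ` {..<n}" for V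
      using that U compact_open_sliceD(1) by auto
    show "openin X (?BS \<inter> W)" using \<open>openin X ?BS\<close> W(1) by (rule openin_Int)
    show "?BS \<inter> W \<noteq> {}" using \<open>b0 \<in> ?BS\<close> W(2) by blast
  qed simp
  then obtain P where P: "openin X P" "P \<noteq> {}" "P \<subseteq> ?BS \<inter> W"
      "\<forall>V\<in>U ` {..<n}. P \<subseteq> V \<or> P \<inter> V = {}"
    by blast
  have constant_on_P: "(f \<star> scaled_char 1 (iv ` B)) (r b)
      = \<nu> b0 (iv b0) * (\<Sum>i<n. if P \<subseteq> U i then c i else 0)" if "b \<in> P" for b
  proof -
    have "scaled_char (c i) (U i) b = (if P \<subseteq> U i then c i else 0)" if "i < n" for i
      using P(4) \<open>b \<in> P\<close> \<open>i < n\<close> by (auto simp: scaled_char_def)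
    then have "f b = (\<Sum>i<n. if P \<subseteq> U i then c i else 0)" unfolding f by simp
    moreover have "b \<in> B" "\<nu> b (iv b) = \<nu> b0 (iv b0)" using that P(3) W(3) by auto
    ultimately show ?thesis using conv_char_inverse_at_range[OF Bs(5,4)] by simp
  qed
  show ?thesis
  proof (intro exI[of _ "r ` P"] conjI ballI)
    show "openin X (r ` P)" using openin_r_image[OF P(1)] .
    show "r ` P \<noteq> {}" "r ` P \<subseteq> S" using P(2,3) by auto
    fix x y assume "x \<in> r ` P" "y \<in> r ` P"
    then show "(f \<star> scaled_char 1 (iv ` B)) x = (f \<star> scaled_char 1 (iv ` B)) y"
      using constant_on_P by auto
  qed
qed

lemma steinberg_corner:
  assumes "f \<in> A" "X interior_of {x. f x \<noteq> 0} \<noteq> {}"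
  obtains B K c where "compact_open_slice X \<Gamma> B" "compact_open_slice X \<Gamma> K" "K \<subseteq> G0" "K \<noteq> {}"
    "c \<noteq> 0" "\<And>z. z \<in> G \<Longrightarrow> r z \<in> K \<Longrightarrow> d z \<in> K \<Longrightarrow>
      (f \<star> scaled_char 1 (iv ` B)) z = scaled_char c K z"
proof -
  obtain \<xi> where "\<xi> \<in> X interior_of {x. f x \<noteq> 0}" using assms(2) by blast
  then obtain B where B: "compact_open_slice X \<Gamma> B" "\<xi> \<in> B" "B \<subseteq> X interior_of {x. f x \<noteq> 0}"
    by (rule ample_basis[OF openin_interior_of])
  note Bs = compact_open_sliceD[OF B(1)]
  obtain VV where VV: "finite VV" "\<And>V. V \<in> VV \<Longrightarrow> openin X V \<and> inj_on d V"
      "\<And>z. (f \<star> scaled_char 1 (iv ` B)) z \<noteq> 0 \<Longrightarrow> z \<in> \<Union>VV"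
    using conv_char_inverse_support_cover[OF assms(1) B(1)] by blast
  have nonzero: "(f \<star> scaled_char 1 (iv ` B)) v \<noteq> 0" if v: "v \<in> r ` B" for v
  proof -
    obtain b where "b \<in> B" "v = r b" using v by blast
    moreover have "b \<in> {x. f x \<noteq> 0}"
      using B(3) interior_of_subset \<open>b \<in> B\<close> by (metis subsetD)
    then have "f b \<noteq> 0" by simp
    moreover have "\<nu> b (iv b) \<noteq> 0" using Bs(5) \<open>b \<in> B\<close> by (intro nu_nonzero) auto
    ultimately show ?thesis using conv_char_inverse_at_range[OF Bs(5,4)] by simp
  qed
  show ?thesis
  proof (rule exists_scalar_corner[OF VV _ _ _ nonzero conv_char_inverse_densely_constant[OF assms(1) B(1)]])
    show "openin X (r ` B)" "r ` B \<subseteq> G0" "r ` B \<noteq> {}"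
      using openin_r_image[OF Bs(1)] Bs(5) B(2) by auto
  next
    fix K c assume "compact_open_slice X \<Gamma> K" "K \<subseteq> G0" "K \<noteq> {}" "c \<noteq> 0"
      "\<And>z. z \<in> G \<Longrightarrow> r z \<in> K \<Longrightarrow> d z \<in> K \<Longrightarrow>
        (f \<star> scaled_char 1 (iv ` B)) z = scaled_char c K z"
    then show thesis by (rule that[OF B(1)])
  qed
qed

subsection \<open>Ideals\<close>

lemma right_ideal_contains_corner:
  assumes supp: "\<And>f. f \<in> A \<Longrightarrow> f \<noteq> (\<lambda>_. 0) \<Longrightarrow> X interior_of {x. f x \<noteq> 0} \<noteq> {}"
    and I: "right_ideal A (\<star>) I" and "f \<in> I" "f \<noteq> (\<lambda>_. 0)"
  obtains e K where "e \<in> I" "compact_open_slice X \<Gamma> K" "K \<subseteq> G0" "K \<noteq> {}"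
    "e \<star> scaled_char 1 K = e" "scaled_char 1 K \<star> e = scaled_char 1 K"
proof -
  have I_mult: "u \<star> a \<in> I" if "u \<in> I" "a \<in> A" for u a
    using I that unfolding right_ideal_def by blast
  have "f \<in> A" using I \<open>f \<in> I\<close> unfolding right_ideal_def by blast
  then obtain B K c where B: "compact_open_slice X \<Gamma> B" and K: "compact_open_slice X \<Gamma> K" "K \<subseteq> G0" "K \<noteq> {}"
    and "c \<noteq> 0" and corner: "\<And>z. z \<in> G \<Longrightarrow> r z \<in> K \<Longrightarrow> d z \<in> K \<Longrightarrow>
      (f \<star> scaled_char 1 (iv ` B)) z = scaled_char c K z"
    using steinberg_corner supp[OF \<open>f \<in> A\<close> \<open>f \<noteq> (\<lambda>_. 0)\<close>] by metis
  define e where "e = (f \<star> scaled_char 1 (iv ` B)) \<star> scaled_char (inverse c) K"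
  have "e \<in> I"
    unfolding e_def using \<open>f \<in> I\<close> B K(1)
    by (intro I_mult scaled_char_in_steinberg compact_open_slice_iv_image)
  have e: "e z = (if z \<in> G \<and> d z \<in> K then (f \<star> scaled_char 1 (iv ` B)) z * inverse c else 0)" for z
    unfolding e_def conv_scaled_char_units_right[OF K(2)] ..
  have "e \<star> scaled_char 1 K = e"
    by (rule ext) (simp add: conv_scaled_char_units_right[OF K(2)] e)
  moreover have "scaled_char 1 K \<star> e = scaled_char 1 K"
  proof
    fix z
    have "z \<in> K \<Longrightarrow> z \<in> G \<and> r z = z \<and> d z = z" using K(2) by auto
    then show "(scaled_char 1 K \<star> e) z = scaled_char 1 K z"
      using corner[of z] \<open>c \<noteq> 0\<close>
      by (auto simp: conv_scaled_char_units_left[OF K(2)] e scaled_char_def)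
  qed
  ultimately show ?thesis using that \<open>e \<in> I\<close> K by blast
qed

lemma right_ideal_contains_infinite_idempotent:
  assumes supp: "\<And>f. f \<in> A \<Longrightarrow> f \<noteq> (\<lambda>_. 0) \<Longrightarrow> X interior_of {x. f x \<noteq> 0} \<noteq> {}"
    and inf: "\<And>L. L \<subseteq> G0 \<Longrightarrow> L \<noteq> {} \<Longrightarrow> compactin X L \<Longrightarrow>
      openin (subtopology X G0) L \<Longrightarrow> infinite_idempotent A (\<star>) (char_fun L)"
    and I: "right_ideal A (\<star>) I" and "f \<in> I" "f \<noteq> (\<lambda>_. 0)"
  shows "\<exists>p\<in>I. infinite_idempotent A (\<star>) p"
proof -
  obtain e K where "e \<in> I" and K: "compact_open_slice X \<Gamma> K" "K \<subseteq> G0" "K \<noteq> {}"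
    and ek: "e \<star> scaled_char 1 K = e" and ke: "scaled_char 1 K \<star> e = scaled_char 1 K"
    using right_ideal_contains_corner[OF supp I \<open>f \<in> I\<close> \<open>f \<noteq> (\<lambda>_. 0)\<close>] by metis
  have "I \<subseteq> A" and I_mult: "\<And>a. a \<in> A \<Longrightarrow> e \<star> a \<in> I"
    using I \<open>e \<in> I\<close> unfolding right_ideal_def by auto
  have "infinite_idempotent A (\<star>) (scaled_char 1 K)"
    using inf[OF K(2,3) compact_open_sliceD(2)[OF K(1)]] compact_open_sliceD(1)[OF K(1)] K(2)
    by (simp add: openin_units_iff char_fun_eq_scaled_char)
  then have "infinite_idempotent A (\<star>) e"
  proof (rule infinite_idempotent_transfer[where S = "Collect fibrewise_finite", rotated -1])
    show "A \<subseteq> Collect fibrewise_finite" using steinberg_fibrewise_finite by blast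
  qed (use fibrewise_finite_conv twisted_conv_assoc \<open>e \<in> I\<close> \<open>I \<subseteq> A\<close> I_mult ek ke in auto)
  then show ?thesis using \<open>e \<in> I\<close> by blast
qed

lemma orbit_meets_open:
  assumes "minimal X \<Gamma>" "u \<in> G0" "openin X K" "K \<subseteq> G0" "K \<noteq> {}"
  obtains a where "a \<in> G" "d a = u" "r a \<in> K"
proof -
  have "(subtopology X G0) closure_of (orbit \<Gamma> u) = G0"
    using assms(1,2) unfolding minimal_def by blast
  then have "K \<inter> (subtopology X G0) closure_of (orbit \<Gamma> u) \<noteq> {}"
    using assms(4,5) by auto
  then have "K \<inter> orbit \<Gamma> u \<noteq> {}"
    using openin_Int_closure_of_eq_empty assms(3,4) openin_units_iff by blast
  then show ?thesis using that unfolding orbit_def by blast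
qed

lemma ideal_spreads_along_orbits:
  assumes I: "two_sided_ideal A (\<star>) I" and "minimal X \<Gamma>"
    and K: "compact_open_slice X \<Gamma> K" "K \<subseteq> G0" "K \<noteq> {}" "scaled_char 1 K \<in> I"
    and "u \<in> G0"
  obtains L where "compact_open_slice X \<Gamma> L" "L \<subseteq> G0" "u \<in> L" "scaled_char 1 L \<in> I"
proof -
  have mult_right: "v \<star> a \<in> I" and mult_left: "a \<star> v \<in> I" if "v \<in> I" "a \<in> A" for v a
    using I that unfolding two_sided_ideal_def right_ideal_def by blast+
  obtain a where a: "a \<in> G" "d a = u" "r a \<in> K"
    using orbit_meets_open[OF \<open>minimal X \<Gamma>\<close> \<open>u \<in> G0\<close> compact_open_sliceD(1)[OF K(1)] K(2,3)] .
  obtain W where W: "openin X W" "a \<in> W" "\<And>b. b \<in> W \<Longrightarrow> \<nu> (iv b) b = \<nu> (iv a) a"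
    using nu_locally_constant[OF continuous_map_pair_iv(2) a(1)] by auto
  have "openin X (W \<inter> {b \<in> G. r b \<in> K})"
    using W(1) compact_open_sliceD(1)[OF K(1)]
    by (intro openin_Int openin_preimage continuous_map_r)
  then obtain C where C: "compact_open_slice X \<Gamma> C" "a \<in> C" "C \<subseteq> W \<inter> {b \<in> G. r b \<in> K}"
    using ample_basis a(1,3) W(2) by (metis (mono_tags, lifting) IntI mem_Collect_eq)
  note Cs = compact_open_sliceD[OF C(1)]
  define c where "c = \<nu> (iv a) a"
  have "c \<noteq> 0" unfolding c_def using a(1) by (intro nu_nonzero) auto
  have "scaled_char 1 K \<star> scaled_char 1 C = scaled_char (1::'k) C"
    using C(3) by (auto simp: fun_eq_iff conv_scaled_char_units_left[OF K(2)] scaled_char_def)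
  then have "scaled_char 1 C \<in> I"
    using mult_right[OF K(4) scaled_char_in_steinberg[OF C(1), where c = 1]] by simp
  then have "scaled_char 1 (iv ` C) \<star> scaled_char 1 C \<in> I"
    using mult_left scaled_char_in_steinberg[OF compact_open_slice_iv_image[OF C(1)]] by blast
  moreover have "scaled_char 1 (iv ` C) \<star> scaled_char 1 C = scaled_char c (d ` C)"
    using Cs(5,3,4) C(3) W(3) unfolding c_def by (intro char_inverse_conv_char) auto
  ultimately have "scaled_char c (d ` C) \<star> scaled_char (inverse c) (d ` C) \<in> I"
    using mult_right scaled_char_in_steinberg[OF compact_open_slice_d_image(1)[OF C(1)]] by metis
  then have "scaled_char 1 (d ` C) \<in> I"
    using \<open>c \<noteq> 0\<close> compact_open_slice_d_image(2)[OF C(1)] by (simp add: scaled_char_units_conv)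
  then show ?thesis
    using that compact_open_slice_d_image[OF C(1)] a(2) C(2) by blast
qed

lemma right_ideal_contains_covered_unit_chars:
  assumes I: "right_ideal A (\<star>) I" and "finite F"
    and F: "\<And>K. K \<in> F \<Longrightarrow> compact_open_slice X \<Gamma> K \<and> K \<subseteq> G0 \<and> scaled_char 1 K \<in> I"
    and L: "compact_open_slice X \<Gamma> L" "L \<subseteq> G0" "L \<subseteq> \<Union>F"
  shows "scaled_char 1 L \<in> I"
  using \<open>finite F\<close> F L
proof (induction F arbitrary: L rule: finite_induct)
  case empty
  then have "scaled_char (1::'k) L = (\<lambda>_. 0)" by (simp add: scaled_char_def fun_eq_iff)
  then show ?case using I unfolding right_ideal_def additive_subgroup_def by simp
next
  case (insert K F)
  have K: "compact_open_slice X \<Gamma> K" "K \<subseteq> G0" "scaled_char 1 K \<in> I"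
    using insert.prems(1) by auto
  note Ls = compact_open_sliceD[OF insert.prems(2)] and Ks = compact_open_sliceD[OF K(1)]
  have diff: "compact_open_slice X \<Gamma> (L - K)"
    using compact_open_units_diff[OF Ls(1,2) insert.prems(3) Ks(1,2) K(2)] insert.prems(3)
    by (intro compact_open_slice_units) auto
  then have "compact_open_slice X \<Gamma> (L - (L - K))"
    using compact_open_units_diff[OF Ls(1,2) insert.prems(3)] compact_open_sliceD[OF diff]
      insert.prems(3)
    by (intro compact_open_slice_units) auto
  then have "scaled_char 1 K \<star> scaled_char 1 (L - (L - K)) \<in> I"
    using I K(3) scaled_char_in_steinberg unfolding right_ideal_def by blast
  moreover have "L - (L - K) = L \<inter> K" "K \<inter> (L \<inter> K) = L \<inter> K" by blast+
  moreover have "L \<inter> K \<subseteq> G0" using insert.prems(3) by blast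
  ultimately have "scaled_char 1 (L \<inter> K) \<in> I"
    using scaled_char_units_conv[OF K(2), of "L \<inter> K" 1 1] by simp
  moreover have "scaled_char 1 (L - K) \<in> I"
    by (intro insert.IH) (use insert.prems diff in auto)
  ultimately have "(\<lambda>x. scaled_char 1 (L \<inter> K) x + scaled_char 1 (L - K) x) \<in> I"
    using I unfolding right_ideal_def by (blast intro: additive_subgroup_add)
  moreover have "(\<lambda>x. scaled_char (1::'k) (L \<inter> K) x + scaled_char 1 (L - K) x) = scaled_char 1 L"
    by (auto simp: scaled_char_def fun_eq_iff)
  ultimately show ?case by simp
qed

lemma ideal_contains_unit_chars:
  assumes I: "two_sided_ideal A (\<star>) I" and "minimal X \<Gamma>"
    and K: "compact_open_slice X \<Gamma> K" "K \<subseteq> G0" "K \<noteq> {}" "scaled_char 1 K \<in> I"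
    and L: "compact_open_slice X \<Gamma> L" "L \<subseteq> G0"
  shows "scaled_char 1 L \<in> I"
proof -
  let ?F = "{L'. compact_open_slice X \<Gamma> L' \<and> L' \<subseteq> G0 \<and> scaled_char 1 L' \<in> I}"
  have "L \<subseteq> \<Union>?F"
  proof
    fix u assume "u \<in> L"
    then obtain L' where "compact_open_slice X \<Gamma> L'" "L' \<subseteq> G0" "u \<in> L'" "scaled_char 1 L' \<in> I"
      using ideal_spreads_along_orbits[OF I \<open>minimal X \<Gamma>\<close> K] L(2) by blast
    then show "u \<in> \<Union>?F" by blast
  qed
  moreover have "\<forall>L'\<in>?F. openin X L'" using compact_open_sliceD(1) by blast
  ultimately obtain F where "finite F" "F \<subseteq> ?F" "L \<subseteq> \<Union>F"
    using compact_open_sliceD(2)[OF L(1)] unfolding compactin_def by meson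
  then show ?thesis
    using I L unfolding two_sided_ideal_def
    by (intro right_ideal_contains_covered_unit_chars[of I F]) auto
qed

lemma steinberg_subset_ideal:
  assumes I: "two_sided_ideal A (\<star>) I"
    and unit_chars: "\<And>L. compact_open_slice X \<Gamma> L \<Longrightarrow> L \<subseteq> G0 \<Longrightarrow> scaled_char 1 L \<in> I"
  shows "A \<subseteq> I"
proof
  fix f assume "f \<in> A"
  then obtain n U c where U: "\<And>i. i < n \<Longrightarrow> compact_open_slice X \<Gamma> (U i)"
    and f: "f = (\<lambda>x. \<Sum>i<(n::nat). scaled_char (c i) (U i) x)"
    by (blast elim: steinberg_algebraE)
  have "scaled_char (c i) (U i) \<in> I" if "i < n" for i
  proof -
    note Ui = U[OF that] compact_open_slice_d_image[OF U[OF that]]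
    have "scaled_char (c i) (U i) \<star> scaled_char 1 (d ` U i) \<in> I"
      using I unit_chars[OF Ui(2,3)] scaled_char_in_steinberg[OF Ui(1)]
      unfolding two_sided_ideal_def by blast
    moreover have "scaled_char (c i) (U i) \<star> scaled_char (1::'k) (d ` U i) = scaled_char (c i) (U i)"
      using compact_open_sliceD(5)[OF Ui(1)]
      by (auto simp: fun_eq_iff conv_scaled_char_units_right[OF Ui(3)] scaled_char_def)
    ultimately show ?thesis by simp
  qed
  moreover have "additive_subgroup I"
    using I unfolding two_sided_ideal_def right_ideal_def by blast
  ultimately have "(\<lambda>x. \<Sum>i<m. scaled_char (c i) (U i) x) \<in> I" if "m \<le> n" for m
    using that
  proof (induction m)
    case 0
    then show ?case by (simp add: additive_subgroup_def)
  next
    case (Suc m)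
    then show ?case by (simp add: additive_subgroup_add)
  qed
  then show "f \<in> I" using f by blast
qed

lemma two_sided_ideal_eq_steinberg:
  assumes supp: "\<And>f. f \<in> A \<Longrightarrow> f \<noteq> (\<lambda>_. 0) \<Longrightarrow> X interior_of {x. f x \<noteq> 0} \<noteq> {}"
    and "minimal X \<Gamma>" and I: "two_sided_ideal A (\<star>) I" and "f \<in> I" "f \<noteq> (\<lambda>_. 0)"
  shows "I = A"
proof -
  have "right_ideal A (\<star>) I" using I unfolding two_sided_ideal_def by blast
  then obtain e K where "e \<in> I" "compact_open_slice X \<Gamma> K" "K \<subseteq> G0" "K \<noteq> {}"
      "scaled_char 1 K \<star> e = scaled_char 1 K"
    using right_ideal_contains_corner[OF supp _ \<open>f \<in> I\<close> \<open>f \<noteq> (\<lambda>_. 0)\<close>] by metis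
  moreover have "scaled_char 1 K \<star> e \<in> I"
    using I \<open>e \<in> I\<close> scaled_char_in_steinberg[OF \<open>compact_open_slice X \<Gamma> K\<close>]
    unfolding two_sided_ideal_def by blast
  ultimately have "A \<subseteq> I"
    using ideal_contains_unit_chars[OF I \<open>minimal X \<Gamma>\<close>] steinberg_subset_ideal[OF I] by metis
  moreover have "I \<subseteq> A" using I unfolding two_sided_ideal_def right_ideal_def by blast
  ultimately show ?thesis by blast
qed

lemma steinberg_simple:
  assumes supp: "\<And>f. f \<in> A \<Longrightarrow> f \<noteq> (\<lambda>_. 0) \<Longrightarrow> X interior_of {x. f x \<noteq> 0} \<noteq> {}"
    and "minimal X \<Gamma>" "G \<noteq> {}"
  shows "simple_ring A (\<star>)"
  unfolding simple_ring_def
proof (intro conjI allI impI)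
  obtain x where "x \<in> G" using \<open>G \<noteq> {}\<close> by blast
  then obtain K where K: "compact_open_slice X \<Gamma> K" "d x \<in> K" "K \<subseteq> G0"
    using ample_basis[OF openin_units] by (metis d_in_units)
  then have "scaled_char 1 K \<star> scaled_char 1 K = scaled_char (1::'k) K"
    "scaled_char (1::'k) K \<noteq> (\<lambda>_. 0)"
    by (auto simp: scaled_char_units_conv fun_eq_iff scaled_char_def)
  then show "\<exists>a\<in>A. \<exists>b\<in>A. a \<star> b \<noteq> (\<lambda>_. 0)"
    using scaled_char_in_steinberg[OF K(1)] by metis
next
  fix I assume I: "two_sided_ideal A (\<star>) I"
  then have "(\<lambda>_. 0) \<in> I"
    unfolding two_sided_ideal_def right_ideal_def additive_subgroup_def by blast
  then show "I = {\<lambda>_. 0} \<or> I = A"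
    using two_sided_ideal_eq_steinberg[OF supp \<open>minimal X \<Gamma>\<close> I] by blast
qed

end

theorem proposition4p8:
  fixes X :: "'g topology" and \<Gamma> :: "'g groupoid" and \<nu> :: "'g \<Rightarrow> 'g \<Rightarrow> 'k::field"
  assumes ample: "ample_groupoid X \<Gamma>"
    and nonempty: "gcar \<Gamma> \<noteq> {}"
    and second_countable: "second_countable X"
    and units_Hausdorff: "Hausdorff_space (subtopology X (gunits \<Gamma>))"
    and cocycle: "continuous_2_cocycle X \<Gamma> \<nu>"
    and normalized: "normalized_cocycle \<Gamma> \<nu>"
    and effective: "effective X \<Gamma>"
    and minimal: "minimal X \<Gamma>"
    and supp: "\<And>f. f \<in> steinberg_algebra X \<Gamma> \<nu> \<Longrightarrow> f \<noteq> (\<lambda>_. 0) \<Longrightarrow>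
                  X interior_of {x. f x \<noteq> 0} \<noteq> {}"
    and inf: "\<And>L. L \<subseteq> gunits \<Gamma> \<Longrightarrow> L \<noteq> {} \<Longrightarrow> compactin X L \<Longrightarrow>
                  openin (subtopology X (gunits \<Gamma>)) L \<Longrightarrow>
                  infinite_idempotent (steinberg_algebra X \<Gamma> \<nu>) (twisted_conv \<Gamma> \<nu>) (char_fun L)"
  shows "simple_purely_infinite (steinberg_algebra X \<Gamma> \<nu>) (twisted_conv \<Gamma> \<nu>)"
proof -
  interpret twisted_ample_groupoid X \<Gamma> \<nu>
    using ample units_Hausdorff cocycle normalized effective by unfold_locales
  have "\<exists>p\<in>I. infinite_idempotent A (\<star>) p"
    if I: "right_ideal A (\<star>) I" "I \<noteq> {\<lambda>_. 0}" for I
  proof -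
    have "(\<lambda>_. 0) \<in> I"
      using I(1) unfolding right_ideal_def additive_subgroup_def by blast
    then obtain f where "f \<in> I" "f \<noteq> (\<lambda>_. 0)" using I(2) by blast
    then show ?thesis
      using right_ideal_contains_infinite_idempotent[OF supp inf I(1)] by blast
  qed
  then show ?thesis
    unfolding simple_purely_infinite_def using steinberg_simple[OF supp minimal nonempty] by blast
qed

end
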